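(* Let $w\in W^{\mathsf A}_\infty$ and $X\in\{\mathsf B,\mathsf C,\mathsf D\}$, and if $X=\mathsf D$ assume $w(1)=1$. Then $G^X_w(\mathbf z)=\Theta(G_w(\mathbf z))$, where $G_w$ is computed by identifying $w$ with the element of $S_\infty$ obtained by replacing each $t_i$ by $s_i$.
   Context: $W^{\mathsf A}_\infty=\langle t_1,t_2,\dots\rangle$ with $t_i=(i,i+1)(-i,-i-1)$, a subgroup of the signed permutation groups $W^{\mathsf D}_\infty\subseteq W^{\mathsf B}_\infty=W^{\mathsf C}_\infty$ (signed permutations: bijections $w$ of $\mathbb Z$ with $w(-i)=-w(i)$ moving finitely many points; type D: even number of $i>0$ with $w(i)<0$); $t_i\mapsto s_i=(i,i+1)$ gives an isomorphism $W^{\mathsf A}_\infty\cong S_\infty$. $W^{\mathsf B}_\infty$ has Coxeter generators $t_0=(-1,1),t_1,\dots$ and $W^{\mathsf D}_\infty$ has $t_{-1}=(1,-2)(2,-1),t_1,\dots$; lengths $\ell^{\mathsf B}=\ell^{\mathsf C}=(\mathrm{inv}+\ell_0)/2$, $\ell^{\mathsf D}=(\mathrm{inv}-\ell_0)/2$, $\mathrm{inv}(w)=|\{i<j\in\mathbb Z:w(i)>w(j)\}|$, $\ell_0(w)=|\{i>0:w(i)<0\}|$. Demazure product $\circ$: associative, $u\circ v=uv$ if lengths add, $s\circ s=s$. Type A: $\mathcal H(w)$ = positive sequences $a$ with $s_{a_1}\circ\cdots\circ s_{a_k}=w$; $\mathcal C(a)$ = sequences $1\le b_1\le\cdots\le b_k$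 with $b_j<b_{j+1}$ whenever $a_j\le a_{j+1}$; $G_w=\sum_{a\in\mathcal H(w)}\sum_{b\in\mathcal C(a)}\beta^{k-\ell(w)}z_{b_1}\cdots z_{b_k}$. Types B,C,D: $\mathcal H^X(w)$ = sequences with entries in $\{0,1,\dots\}$ (B, C) or $\{-1,1,2,\dots\}$ (D) and $t_{a_1}\circ\cdots\circ t_{a_k}=w$; $G^X_w=\sum_{a\in\mathcal H^X(w)}\sum_{b\in\mathcal C^X(a)}2^{|b|-\gamma(a,b)-o^X(a)}\beta^{k-\ell^X(w)}z_{b_1}\cdots z_{b_k}$ where $o^{\mathsf B}(a)=\#\{a_i=0\}$, $o^{\mathsf C}=0$, $o^{\mathsf D}(a)=\#\{a_i=\pm1\}$, $\mathcal C^X(a)$ = sequences $1\le b_1\le\cdots\le b_k$ with $b_{i-1}<b_{i+1}$ whenever $|a_{i-1}|\le|a_i|\ge|a_{i+1}|$ and $b_i<b_{i+1}$ when ($X=\mathsf B$, $a_i=a_{i+1}=0$) or ($X=\mathsf D$, $a_i=a_{i+1}=\pm1$), $|b|$ the number of distinct entries, $\gamma(a,b)=\#\{i:a_i=a_{i+1},b_i=b_{i+1}\}$. Quasisymmetric functions: for a finite integer sequence $a$, $\mathsf{mperm}(a)$ deletes each entry equal to its predecessor; a multi-permutation is a sequence with no two equal adjacent entries. For a multi-permutation $\pi$, $L^{(\beta)}_\pi=\sum_{a:\mathsf{mperm}(a)=\pi}\sum_{b\in\mathcal C(a)}\beta^{\ell(a)-\ell(\pi)}\mathbf z_b$ and $K^{(\beta)}_\pi=\sum_{a:\mathsf{mperm}(a)=\pi}\sum_{b\in\mathcal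 U(a)}\beta^{\ell(a)-\ell(\pi)}z_{|b_1|}\cdots z_{|b_k|}$, where $\mathcal U(a)$ is the set of sequences $b$ with $0\ne b_1\preceq\cdots\preceq b_k$ in the order $0\prec-1\prec1\prec-2\prec2\prec\cdots$, with $|a_i|>|a_{i+1}|$ whenever $b_i=b_{i+1}<0$ and $|a_i|<|a_{i+1}|$ whenever $b_i=b_{i+1}>0$. Every element of the ring $\mathbf{QSym}_\beta$ of quasisymmetric power series over $\mathbb Z[\beta]$ is a unique (possibly infinite) $\mathbb Z[\beta]$-combination of $L^{(\beta)}$-functions, and $\Theta:\mathbf{QSym}_\beta\to\mathbf{QSym}_\beta$ is the continuous ring endomorphism with $\Theta(L^{(\beta)}_\pi)=K^{(\beta)}_\pi$ for all multi-permutations $\pi$. *)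

theory Defs
  imports "HOL-Computational_Algebra.Polynomial" "HOL-Library.Multiset"
begin

text \<open>A monomial z_1^{m_1} z_2^{m_2} ... is an exponent function m :: nat => nat;
  a power series is a function from monomials to coefficients.\<close>

definition beta :: "rat poly" where "beta = monom 1 1"

type_synonym pseries = "(nat \<Rightarrow> nat) \<Rightarrow> rat poly"

definition mono :: "nat list \<Rightarrow> nat \<Rightarrow> nat" where
  "mono b = (\<lambda>i. count (mset b) i)"

definition sA :: "nat \<Rightarrow> nat \<Rightarrow> nat" where
  "sA i = (\<lambda>n. if n = i then i + 1 else if n = i + 1 then i else n)"

definition lenA :: "(nat \<Rightarrow> nat) \<Rightarrow> nat" where
  "lenA \<sigma> = card {(i, j). 0 < i \<and> i < j \<and> \<sigma> i > \<sigma> j}"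

definition demA_step :: "(nat \<Rightarrow> nat) \<Rightarrow> nat \<Rightarrow> (nat \<Rightarrow> nat)" where
  "demA_step u i = (let v = u \<circ> sA i in if lenA v > lenA u then v else u)"

definition demA :: "nat list \<Rightarrow> (nat \<Rightarrow> nat)" where
  "demA a = foldl demA_step id a"

definition HA :: "(nat \<Rightarrow> nat) \<Rightarrow> nat list set" where
  "HA \<sigma> = {a. (\<forall>j\<in>set a. 1 \<le> j) \<and> demA a = \<sigma>}"

definition CA :: "nat list \<Rightarrow> nat list \<Rightarrow> bool" where
  "CA a b \<longleftrightarrow> length b = length a \<and> sorted b \<and> (\<forall>x\<in>set b. 1 \<le> x) \<and>
     (\<forall>j. j + 1 < length a \<and> a ! j \<le> a ! (j + 1) \<longrightarrow> b ! j < b ! (j + 1))"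

definition GA :: "(nat \<Rightarrow> nat) \<Rightarrow> pseries" where
  "GA \<sigma> m = (\<Sum>(a, b) \<in> {(a, b). a \<in> HA \<sigma> \<and> CA a b \<and> mono b = m}.
                beta ^ (length a - lenA \<sigma>))"

datatype ctype = B | C | D

definition gen :: "int \<Rightarrow> int \<Rightarrow> int" where
  "gen j = (\<lambda>n.
     if j = 0 then (if n = 1 then -1 else if n = -1 then 1 else n)
     else if j = -1 then (if n = 1 then -2 else if n = -2 then 1
                          else if n = 2 then -1 else if n = -1 then 2 else n)
     else (if n = j then j + 1 else if n = j + 1 then j
           else if n = -j then -j - 1 else if n = -j - 1 then -j else n))"

definition invZ :: "(int \<Rightarrow> int) \<Rightarrow> nat" where
  "invZ w = card {(i, j). i < j \<and> w i > w j}"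

definition ell0 :: "(int \<Rightarrow> int) \<Rightarrow> nat" where
  "ell0 w = card {i. 0 < i \<and> w i < 0}"

definition lenX :: "ctype \<Rightarrow> (int \<Rightarrow> int) \<Rightarrow> nat" where
  "lenX X w = (if X = D then nat ((int (invZ w) - int (ell0 w)) div 2)
               else nat ((int (invZ w) + int (ell0 w)) div 2))"

definition demX_step :: "ctype \<Rightarrow> (int \<Rightarrow> int) \<Rightarrow> int \<Rightarrow> (int \<Rightarrow> int)" where
  "demX_step X u j = (let v = u \<circ> gen j in if lenX X v > lenX X u then v else u)"

definition demX :: "ctype \<Rightarrow> int list \<Rightarrow> (int \<Rightarrow> int)" where
  "demX X a = foldl (demX_step X) id a"

definition letterX :: "ctype \<Rightarrow> int \<Rightarrow> bool" where
  "letterX X j \<longleftrightarrow> (if X = D then j = -1 \<or> 1 \<le> j else 0 \<le> j)"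

definition HX :: "ctype \<Rightarrow> (int \<Rightarrow> int) \<Rightarrow> int list set" where
  "HX X w = {a. (\<forall>j\<in>set a. letterX X j) \<and> demX X a = w}"

definition CX :: "ctype \<Rightarrow> int list \<Rightarrow> nat list \<Rightarrow> bool" where
  "CX X a b \<longleftrightarrow> length b = length a \<and> sorted b \<and> (\<forall>x\<in>set b. 1 \<le> x) \<and>
     (\<forall>i. 0 < i \<and> i + 1 < length a \<and> \<bar>a ! (i - 1)\<bar> \<le> \<bar>a ! i\<bar> \<and> \<bar>a ! (i + 1)\<bar> \<le> \<bar>a ! i\<bar>
            \<longrightarrow> b ! (i - 1) < b ! (i + 1)) \<and>
     (\<forall>i. i + 1 < length a \<and>
            ((X = B \<and> a ! i = 0 \<and> a ! (i + 1) = 0) \<or>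
             (X = D \<and> a ! i = a ! (i + 1) \<and> \<bar>a ! i\<bar> = 1))
            \<longrightarrow> b ! i < b ! (i + 1))"

definition gamma :: "int list \<Rightarrow> nat list \<Rightarrow> nat" where
  "gamma a b = card {i. i + 1 < length a \<and> a ! i = a ! (i + 1) \<and> b ! i = b ! (i + 1)}"

definition oX :: "ctype \<Rightarrow> int list \<Rightarrow> nat" where
  "oX X a = (if X = B then length (filter (\<lambda>j. j = 0) a)
             else if X = C then 0 else length (filter (\<lambda>j. \<bar>j\<bar> = 1) a))"

definition GX :: "ctype \<Rightarrow> (int \<Rightarrow> int) \<Rightarrow> pseries" where
  "GX X w m = (\<Sum>(a, b) \<in> {(a, b). a \<in> HX X w \<and> CX X a b \<and> mono b = m}.
      smult ((2::rat) powi (int (card (set b)) - int (gamma a b) - int (oX X a)))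
            (beta ^ (length a - lenX X w)))"

definition multiperm :: "nat list \<Rightarrow> bool" where
  "multiperm \<pi> \<longleftrightarrow> (\<forall>i. i + 1 < length \<pi> \<longrightarrow> \<pi> ! i \<noteq> \<pi> ! (i + 1))"

text \<open>mperm deletes each entry equal to its predecessor: this is remdups_adj.\<close>
abbreviation mperm :: "nat list \<Rightarrow> nat list" where "mperm \<equiv> remdups_adj"

definition Lfun :: "nat list \<Rightarrow> pseries" where
  "Lfun \<pi> m = (\<Sum>(a, b) \<in> {(a, b). mperm a = \<pi> \<and> CA a b \<and> mono b = m}.
                 beta ^ (length a - length \<pi>))"

text \<open>The order 0 < -1 < 1 < -2 < 2 < ... on integers, via a rank function.\<close>
definition prec_rank :: "int \<Rightarrow> int" where
  "prec_rank x = (if x < 0 then 2 * (- x) - 1 else 2 * x)"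

definition UK :: "nat list \<Rightarrow> int list \<Rightarrow> bool" where
  "UK a b \<longleftrightarrow> length b = length a \<and> (\<forall>x\<in>set b. x \<noteq> 0) \<and> sorted (map prec_rank b) \<and>
     (\<forall>i. i + 1 < length a \<and> b ! i = b ! (i + 1) \<and> b ! i < 0 \<longrightarrow> a ! i > a ! (i + 1)) \<and>
     (\<forall>i. i + 1 < length a \<and> b ! i = b ! (i + 1) \<and> b ! i > 0 \<longrightarrow> a ! i < a ! (i + 1))"

definition Kfun :: "nat list \<Rightarrow> pseries" where
  "Kfun \<pi> m = (\<Sum>(a, b) \<in> {(a, b). mperm a = \<pi> \<and> UK a b \<and> mono (map (\<lambda>x. nat \<bar>x\<bar>) b) = m}.
                 beta ^ (length a - length \<pi>))"

text \<open>Theta f = g: f = sum_pi c_pi L_pi and g = sum_pi c_pi K_pi for Z[beta]-coefficients c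
  (sums taken coefficientwise, i.e. in the formal power series topology).\<close>
definition Theta_rel :: "pseries \<Rightarrow> pseries \<Rightarrow> bool" where
  "Theta_rel f g \<longleftrightarrow> (\<exists>c :: nat list \<Rightarrow> rat poly.
     (\<forall>\<pi>. c \<pi> \<noteq> 0 \<longrightarrow> multiperm \<pi> \<and> (\<forall>x\<in>set \<pi>. 1 \<le> x)) \<and>
     (\<forall>\<pi>. c \<pi> \<in> range (map_poly rat_of_int)) \<and>
     (\<forall>m. finite {\<pi>. c \<pi> \<noteq> 0 \<and> Lfun \<pi> m \<noteq> 0} \<and> finite {\<pi>. c \<pi> \<noteq> 0 \<and> Kfun \<pi> m \<noteq> 0}) \<and>
     (\<forall>m. f m = (\<Sum>\<pi> \<in> {\<pi>. c \<pi> \<noteq> 0 \<and> Lfun \<pi> m \<noteq> 0}. c \<pi> * Lfun \<pi> m)) \<and>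
     (\<forall>m. g m = (\<Sum>\<pi> \<in> {\<pi>. c \<pi> \<noteq> 0 \<and> Kfun \<pi> m \<noteq> 0}. c \<pi> * Kfun \<pi> m)))"

definition wordT :: "nat list \<Rightarrow> (int \<Rightarrow> int)" where
  "wordT is = foldr (\<lambda>i u. gen (int i) \<circ> u) is id"

definition wordS :: "nat list \<Rightarrow> (nat \<Rightarrow> nat)" where
  "wordS is = foldr (\<lambda>i u. sA i \<circ> u) is id"

end

theory Submission
  imports Defs
begin

text \<open>Lift \<open>w\<close> to the signed permutation with \<open>w(-n) = -w(n)\<close>. The lift has the same length in
  types B, C and D as \<open>w\<close> in type A, and it sends no positive integer to a negative one. Once a
  word uses the letter \<open>0\<close> (or, in type D, one of \<open>\<plusminus>1\<close>), its Demazure product does send a positive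
  integer to a negative one (or, in type D, moves \<open>1\<close> upwards), and later letters cannot undo this.
  Hence, when \<open>w(1) = 1\<close> in type D, the Hecke words of \<open>w\<close> in type X are exactly its type A Hecke
  words, on which \<open>C\<^sup>X\<close> reduces to the peak condition of type C and \<open>o\<^sup>X\<close> vanishes.
  Grouping Hecke words by \<open>mperm\<close> writes \<open>G\<^sub>w = \<Sum>\<^sub>\<pi> \<beta>\<^bsup>\<ell>(\<pi>) - \<ell>(w)\<^esup> L\<^sub>\<pi>\<close>, the sum running over the Hecke
  words \<open>\<pi>\<close> of \<open>w\<close> without repetitions. The same grouping writes \<open>G\<^sup>X\<^sub>w\<close> as \<open>\<Sum>\<^sub>\<pi> \<beta>\<^bsup>\<ell>(\<pi>) - \<ell>(w)\<^esup> K\<^sub>\<pi>\<close>,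
  because the weight \<open>2\<^bsup>|b| - \<gamma>(a,b)\<^esup>\<close> of a pair \<open>(a, b)\<close> counts the sequences \<open>s \<in> U(a)\<close> with
  \<open>|s| = b\<close>.\<close>

section \<open>Inversions and right multiplication by an involution\<close>

definition inversions :: "'a::linorder set \<Rightarrow> ('a \<Rightarrow> 'b::linorder) \<Rightarrow> ('a \<times> 'a) set" where
  "inversions A u = {(i, j). i \<in> A \<and> j \<in> A \<and> i < j \<and> u j < u i}"

definition ordered_pair_map :: "('a \<Rightarrow> 'a::linorder) \<Rightarrow> 'a \<times> 'a \<Rightarrow> 'a \<times> 'a" where
  "ordered_pair_map t p = (min (t (fst p)) (t (snd p)), max (t (fst p)) (t (snd p)))"

context
  fixes A :: "'a::linorder set" and t :: "'a \<Rightarrow> 'a"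
  assumes involution: "\<And>i. i \<in> A \<Longrightarrow> t i \<in> A \<and> t (t i) = i"
begin

private abbreviation (input) "pairs \<equiv> {(i, j). i \<in> A \<and> j \<in> A \<and> i < j}"

lemma ordered_pair_map_involution:
  assumes "p \<in> pairs"
  shows "ordered_pair_map t p \<in> pairs \<and> ordered_pair_map t (ordered_pair_map t p) = p"
proof -
  obtain i j where p: "p = (i, j)" "i \<in> A" "j \<in> A" "i < j" using assms by auto
  have ti: "t i \<in> A" "t (t i) = i" and tj: "t j \<in> A" "t (t j) = j"
    using involution[OF p(2)] involution[OF p(3)] by auto
  have "t i \<noteq> t j" using ti(2) tj(2) p(4) by (metis order.irrefl)
  then consider "t i < t j" | "t j < t i" by (metis neq_iff)
  then show ?thesis
  proof cases
    case 1
    then have "ordered_pair_map t p = (t i, t j)" by (simp add: p ordered_pair_map_def)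
    then show ?thesis using 1 p ti tj by (simp add: ordered_pair_map_def)
  next
    case 2
    then have "ordered_pair_map t p = (t j, t i)" by (simp add: p ordered_pair_map_def)
    then show ?thesis using 2 p ti tj by (simp add: ordered_pair_map_def)
  qed
qed

lemma mem_inversions_comp_involution:
  assumes "inj_on u A" "p \<in> pairs"
  shows "p \<in> inversions A (u \<circ> t) \<longleftrightarrow>
    ordered_pair_map t p \<in> sym_diff (inversions A u) (inversions A t)"
proof -
  obtain i j where p: "p = (i, j)" "i \<in> A" "j \<in> A" "i < j" using assms(2) by auto
  have ti: "t i \<in> A" "t (t i) = i" and tj: "t j \<in> A" "t (t j) = j"
    using involution[OF p(2)] involution[OF p(3)] by auto
  have "t i \<noteq> t j" using ti(2) tj(2) p(4) by (metis order.irrefl)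
  moreover have "u (t i) \<noteq> u (t j)" using calculation assms(1) ti(1) tj(1) by (meson inj_onD)
  ultimately show ?thesis
    using p ti tj by (cases "t i < t j") (auto simp: ordered_pair_map_def inversions_def)
qed

lemma card_inversions_comp_involution:
  assumes "inj_on u A" "finite (inversions A u)" "finite (inversions A t)"
  shows "card (inversions A (u \<circ> t)) + card (inversions A u \<inter> inversions A t)
       = card (inversions A u) + card (inversions A t - inversions A u)"
proof -
  let ?\<Delta> = "sym_diff (inversions A u) (inversions A t)"
  have "bij_betw (ordered_pair_map t) (inversions A (u \<circ> t)) ?\<Delta>"
  proof (rule bij_betw_byWitness[where f' = "ordered_pair_map t"])
    have sub: "inversions A (u \<circ> t) \<subseteq> pairs" "?\<Delta> \<subseteq> pairs" by (auto simp: inversions_def)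
    show "\<forall>p\<in>inversions A (u \<circ> t). ordered_pair_map t (ordered_pair_map t p) = p"
      "\<forall>q\<in>?\<Delta>. ordered_pair_map t (ordered_pair_map t q) = q"
      using sub ordered_pair_map_involution by blast+
    show "ordered_pair_map t ` inversions A (u \<circ> t) \<subseteq> ?\<Delta>"
      using sub(1) mem_inversions_comp_involution[OF assms(1)] by blast
    show "ordered_pair_map t ` ?\<Delta> \<subseteq> inversions A (u \<circ> t)"
    proof
      fix p assume "p \<in> ordered_pair_map t ` ?\<Delta>"
      then obtain q where q: "q \<in> ?\<Delta>" "p = ordered_pair_map t q" by blast
      then have "p \<in> pairs" "ordered_pair_map t p = q"
        using sub(2) ordered_pair_map_involution[of q] by auto
      then show "p \<in> inversions A (u \<circ> t)"
        using q(1) mem_inversions_comp_involution[OF assms(1)] by simp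
    qed
  qed
  then have "card (inversions A (u \<circ> t)) = card ?\<Delta>" by (rule bij_betw_same_card)
  also have "\<dots> = card (inversions A u - inversions A t) + card (inversions A t - inversions A u)"
    using assms(2,3) by (intro card_Un_disjoint) auto
  finally show ?thesis using card_Int_Diff[OF assms(2), of "inversions A t"] by simp
qed

end

lemma inj_maps_into_support:
  assumes "inj u" "\<And>n. n \<notin> S \<Longrightarrow> u n = n" "n \<in> S"
  shows "u n \<in> S"
  using assms by (metis injD)

lemma inversions_subset_interval:
  assumes "inj u" "\<And>n. n \<notin> {lo..hi} \<Longrightarrow> u n = n"
  shows "inversions A u \<subseteq> {lo..hi} \<times> {lo..hi}"
proof
  fix p assume "p \<in> inversions A u"
  then obtain i j where p: "p = (i, j)" "i < j" "u j < u i" by (auto simp: inversions_def)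
  have maps: "u n \<in> {lo..hi}" if "n \<in> {lo..hi}" for n
    using inj_maps_into_support[OF assms that] .
  consider "i \<in> {lo..hi}" "j \<in> {lo..hi}" | "i \<notin> {lo..hi}" "j \<notin> {lo..hi}"
    | "i \<in> {lo..hi}" "j \<notin> {lo..hi}" | "i \<notin> {lo..hi}" "j \<in> {lo..hi}" by blast
  then show "p \<in> {lo..hi} \<times> {lo..hi}"
  proof cases
    case 2
    then show ?thesis using p assms(2)[of i] assms(2)[of j] by simp
  next
    case 3
    then have "hi < j" using p(2) by (auto simp: not_le)
    then show ?thesis using 3 p maps[of i] assms(2)[of j] by auto
  next
    case 4
    then have "i < lo" using p(2) by (auto simp: not_le)
    then show ?thesis using 4 p maps[of j] assms(2)[of i] by auto
  qed (use p(1) in simp)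
qed

section \<open>Type A: finitary permutations and the Demazure product\<close>

definition finitary_perm :: "(nat \<Rightarrow> nat) \<Rightarrow> bool" where
  "finitary_perm u \<longleftrightarrow> inj u \<and> u 0 = 0 \<and> (\<exists>K. \<forall>n>K. u n = n)"

lemma lenA_eq_card_inversions: "lenA u = card (inversions {0<..} u)"
  unfolding lenA_def inversions_def by (rule arg_cong[where f = card]) auto

lemma sA_sA [simp]: "sA k (sA k n) = n"
  by (auto simp: sA_def)

lemma sA_pos: "1 \<le> k \<Longrightarrow> 0 < n \<Longrightarrow> 0 < sA k n"
  by (simp add: sA_def)

lemma sA_comp_sA [simp]: "u \<circ> sA k \<circ> sA k = u"
  by (simp add: fun_eq_iff)

lemma inj_sA: "inj (sA k)"
  by (metis injI sA_sA)

lemma inversions_sA: "1 \<le> k \<Longrightarrow> inversions {0<..} (sA k) = {(k, k + 1)}"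
  by (auto simp: inversions_def sA_def split: if_splits)

lemma finitary_perm_id: "finitary_perm id"
  by (simp add: finitary_perm_def)

lemma finitary_perm_sA: "1 \<le> k \<Longrightarrow> finitary_perm (sA k)"
  unfolding finitary_perm_def using inj_sA by (auto simp: sA_def intro!: exI[of _ "k + 1"])

lemma finitary_perm_comp:
  assumes "finitary_perm u" "finitary_perm v"
  shows "finitary_perm (u \<circ> v)"
proof -
  obtain K L where "\<forall>n>K. u n = n" "\<forall>n>L. v n = n"
    using assms by (auto simp: finitary_perm_def)
  then have "\<forall>n>max K L. (u \<circ> v) n = n" by simp
  moreover have "inj (u \<circ> v)" "(u \<circ> v) 0 = 0"
    using assms by (auto simp: finitary_perm_def intro: inj_compose)
  ultimately show ?thesis unfolding finitary_perm_def by blast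
qed

lemma finitary_perm_pos: "finitary_perm u \<Longrightarrow> 0 < n \<Longrightarrow> 0 < u n"
  unfolding finitary_perm_def by (metis gr0I injD)

lemma finite_inversions_finitary:
  assumes "finitary_perm u"
  shows "finite (inversions A u)"
proof -
  obtain K where K: "\<forall>n>K. u n = n" using assms by (auto simp: finitary_perm_def)
  have "inversions A u \<subseteq> {0..K} \<times> {0..K}"
    using assms K by (intro inversions_subset_interval) (auto simp: finitary_perm_def)
  then show ?thesis by (rule finite_subset) simp
qed

lemma lenA_comp_sA:
  assumes "finitary_perm u" "1 \<le> k"
  shows "lenA (u \<circ> sA k) = (if u k < u (k + 1) then lenA u + 1 else lenA u - 1)"
proof -
  have "inj_on u {0<..}" using assms(1) by (auto simp: finitary_perm_def intro: inj_on_subset)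
  then have card: "lenA (u \<circ> sA k) + card (inversions {0<..} u \<inter> {(k, k + 1)})
      = lenA u + card ({(k, k + 1)} - inversions {0<..} u)"
    using card_inversions_comp_involution[of "{0<..}" "sA k" u] assms
      finite_inversions_finitary[OF assms(1)]
    by (simp add: sA_pos lenA_eq_card_inversions inversions_sA)
  have "u k \<noteq> u (k + 1)" using assms(1) by (auto simp: finitary_perm_def dest: injD)
  then have "(k, k + 1) \<in> inversions {0<..} u \<longleftrightarrow> \<not> u k < u (k + 1)"
    using assms(2) by (auto simp: inversions_def)
  then show ?thesis using card by (auto simp: insert_Diff_if)
qed

lemma demA_step_cases: "demA_step u k = u \<or> demA_step u k = u \<circ> sA k"
  by (simp add: demA_step_def Let_def)

lemma demA_step_idem: "demA_step (demA_step u k) k = demA_step u k"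
  by (auto simp: demA_step_def Let_def)

lemma demA_step_ascent:
  "finitary_perm u \<Longrightarrow> 1 \<le> k \<Longrightarrow> u k < u (k + 1) \<Longrightarrow> demA_step u k = u \<circ> sA k"
  by (simp add: demA_step_def lenA_comp_sA)

lemma demA_step_descent:
  "finitary_perm u \<Longrightarrow> 1 \<le> k \<Longrightarrow> \<not> u k < u (k + 1) \<Longrightarrow> demA_step u k = u"
  unfolding demA_step_def Let_def using lenA_comp_sA by auto

lemma finitary_perm_demA_step: "finitary_perm u \<Longrightarrow> 1 \<le> k \<Longrightarrow> finitary_perm (demA_step u k)"
  using demA_step_cases finitary_perm_comp finitary_perm_sA by metis

lemma foldl_demA_step_remdups_adj: "foldl demA_step u (remdups_adj a) = foldl demA_step u a"
  by (induction a arbitrary: u rule: remdups_adj.induct) (auto simp: demA_step_idem)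

lemma demA_remdups_adj: "demA (remdups_adj a) = demA a"
  by (simp add: demA_def foldl_demA_step_remdups_adj)

lemma finitary_perm_foldl_demA_step:
  "finitary_perm u \<Longrightarrow> \<forall>k\<in>set a. 1 \<le> k \<Longrightarrow> finitary_perm (foldl demA_step u a)"
  by (induction a arbitrary: u) (auto simp: finitary_perm_demA_step)

lemma finitary_perm_demA: "\<forall>k\<in>set a. 1 \<le> k \<Longrightarrow> finitary_perm (demA a)"
  by (simp add: demA_def finitary_perm_foldl_demA_step finitary_perm_id)

lemma lenA_id: "lenA id = 0"
proof -
  have "inversions {0<..} (id :: nat \<Rightarrow> nat) = {}" by (auto simp: inversions_def)
  then show ?thesis by (simp add: lenA_eq_card_inversions)
qed

lemma lenA_demA_le_length: "\<forall>k\<in>set a. 1 \<le> k \<Longrightarrow> lenA (demA a) \<le> length a"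
proof (induction a rule: rev_induct)
  case Nil
  then show ?case unfolding demA_def using lenA_id by (simp add: id_def)
next
  case (snoc k a)
  have "finitary_perm (demA a)" "1 \<le> k" using snoc.prems by (auto intro: finitary_perm_demA)
  then have "lenA (demA_step (demA a) k) \<le> lenA (demA a) + 1"
    using demA_step_cases[of "demA a" k] by (auto simp: lenA_comp_sA)
  then show ?case using snoc by (simp add: demA_def)
qed

text \<open>A letter \<open>k\<close> of a Hecke word leaves a descent at \<open>k\<close> that later letters cannot repair, so
  the Demazure product no longer stabilises \<open>{1..k}\<close>; a permutation fixing everything beyond \<open>K\<close>
  stabilises \<open>{1..k}\<close> for \<open>k \<ge> K\<close>. Hence all letters of Hecke words of \<open>\<sigma>\<close> are bounded.\<close>

lemma demA_step_has_descent:
  assumes "finitary_perm u" "1 \<le> k"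
  shows "demA_step u k (k + 1) < demA_step u k k"
proof (cases "u k < u (k + 1)")
  case True
  then show ?thesis using demA_step_ascent[OF assms] by (simp add: sA_def)
next
  case False
  moreover have "u k \<noteq> u (k + 1)" using assms(1) by (auto simp: finitary_perm_def dest: injD)
  ultimately show ?thesis using demA_step_descent[OF assms] by simp
qed

lemma descent_not_stabilizes:
  assumes "finitary_perm v" "v (k + 1) < v k"
  shows "v ` {1..k} \<noteq> {1..k}"
proof
  assume stab: "v ` {1..k} = {1..k}"
  have "k \<noteq> 0"
  proof
    assume "k = 0"
    then show False using assms by (simp add: finitary_perm_def)
  qed
  then have "v k \<le> k" using stab by auto
  have "v (k + 1) \<notin> v ` {1..k}" using assms(1) by (auto simp: finitary_perm_def inj_image_mem_iff)
  then have "v (k + 1) \<notin> {1..k}" using stab by simp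
  moreover have "0 < v (k + 1)" using finitary_perm_pos[OF assms(1)] by simp
  ultimately show False using \<open>v k \<le> k\<close> assms(2) by simp
qed

lemma sA_image_initial:
  assumes "j \<noteq> k" "1 \<le> j"
  shows "sA j ` {1..k} = {1..k}"
proof -
  have maps: "sA j n \<in> {1..k}" if "n \<in> {1..k}" for n
    using that assms by (auto simp: sA_def)
  show ?thesis
  proof
    show "{1..k} \<subseteq> sA j ` {1..k}" using maps sA_sA by (metis image_eqI subsetI)
  qed (use maps in blast)
qed

lemma foldl_demA_step_not_stabilizes:
  assumes "finitary_perm u" "\<forall>j\<in>set a. 1 \<le> j" "k \<in> set a \<or> u ` {1..k} \<noteq> {1..k}"
  shows "foldl demA_step u a ` {1..k} \<noteq> {1..k}"
  using assms
proof (induction a arbitrary: u)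
  case (Cons j a)
  have j: "1 \<le> j" using Cons.prems(2) by simp
  have "k \<in> set a \<or> demA_step u j ` {1..k} \<noteq> {1..k}"
  proof (cases "j = k")
    case True
    have "finitary_perm (demA_step u k)" "demA_step u k (k + 1) < demA_step u k k"
      using finitary_perm_demA_step[OF Cons.prems(1)] demA_step_has_descent[OF Cons.prems(1)] j True
      by simp_all
    then show ?thesis using True descent_not_stabilizes by simp
  next
    case False
    from j have "sA j ` {1..k} = {1..k}" using sA_image_initial[OF False] by blast
    then have "(u \<circ> sA j) ` {1..k} = u ` {1..k}" by (metis image_comp)
    then have "demA_step u j ` {1..k} = u ` {1..k}" using demA_step_cases[of u j] by metis
    then show ?thesis using Cons.prems False by simp
  qed
  then show ?case using Cons by (simp add: finitary_perm_demA_step)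
qed simp

lemma finitary_stabilizes_initial:
  assumes "finitary_perm u" "\<forall>n>K. u n = n" "K \<le> k"
  shows "u ` {1..k} = {1..k}"
proof (rule endo_inj_surj)
  show "u ` {1..k} \<subseteq> {1..k}"
  proof
    fix m assume "m \<in> u ` {1..k}"
    then obtain n where n: "n \<in> {1..k}" "m = u n" by blast
    have "u n \<in> {..K}" if "n \<le> K"
      using inj_maps_into_support[of u "{..K}" n] assms that by (auto simp: finitary_perm_def)
    then show "m \<in> {1..k}" using n assms finitary_perm_pos[OF assms(1), of n] by (cases "n \<le> K") auto
  qed
  show "inj_on u {1..k}" using assms(1) by (auto simp: finitary_perm_def intro: inj_on_subset)
qed simp

lemma HA_letter_bound:
  assumes "finitary_perm \<sigma>" "\<forall>n>K. \<sigma> n = n" "a \<in> HA \<sigma>" "k \<in> set a"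
  shows "k < K"
proof -
  have "demA a ` {1..k} \<noteq> {1..k}"
    using assms(3,4) foldl_demA_step_not_stabilizes[OF finitary_perm_id] by (auto simp: HA_def demA_def)
  moreover have "\<sigma> = demA a" using assms(3) by (simp add: HA_def)
  ultimately show ?thesis using finitary_stabilizes_initial[OF assms(1,2), of k] by force
qed

lemma finite_HA_length_le:
  assumes "finitary_perm \<sigma>"
  shows "finite {a \<in> HA \<sigma>. length a \<le> N}"
proof -
  obtain K where K: "\<forall>n>K. \<sigma> n = n" using assms by (auto simp: finitary_perm_def)
  have "{a \<in> HA \<sigma>. length a \<le> N} \<subseteq> {a. set a \<subseteq> {..<K} \<and> length a \<le> N}"
    using HA_letter_bound[OF assms K] by auto
  then show ?thesis by (rule finite_subset) (simp add: finite_lists_length_le)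
qed

section \<open>Signed permutations and the generators of types B, C and D\<close>

definition signed_perm :: "(int \<Rightarrow> int) \<Rightarrow> bool" where
  "signed_perm u \<longleftrightarrow> inj u \<and> (\<forall>n. u (- n) = - u n) \<and> (\<exists>K. \<forall>n. K < \<bar>n\<bar> \<longrightarrow> u n = n)"

lemma gen_0: "gen 0 n = (if n = 1 then -1 else if n = -1 then 1 else n)"
  by (simp add: gen_def)

lemma gen_m1:
  "gen (-1) n = (if n = 1 then -2 else if n = -2 then 1 else if n = 2 then -1 else if n = -1 then 2 else n)"
  by (simp add: gen_def)

lemma gen_pos:
  "1 \<le> j \<Longrightarrow> gen j n =
     (if n = j then j + 1 else if n = j + 1 then j else if n = -j then -j - 1 else if n = -j - 1 then -j else n)"
  by (simp add: gen_def)

lemma letter_cases: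
  assumes "-1 \<le> (j::int)"
  obtains "j = -1" | "j = 0" | "1 \<le> j"
  using assms by linarith

lemma gen_gen [simp]: "-1 \<le> j \<Longrightarrow> gen j (gen j n) = n"
  by (erule letter_cases) (auto simp: gen_0 gen_m1 gen_pos)

lemma gen_uminus: "-1 \<le> j \<Longrightarrow> gen j (- n) = - gen j n"
  by (erule letter_cases) (auto simp: gen_0 gen_m1 gen_pos)

lemma gen_fixes: "-1 \<le> j \<Longrightarrow> \<bar>j\<bar> + 2 < \<bar>n\<bar> \<Longrightarrow> gen j n = n"
  by (erule letter_cases) (auto simp: gen_0 gen_m1 gen_pos)

lemma gen_pos_pos: "1 \<le> j \<Longrightarrow> 0 < i \<Longrightarrow> 0 < gen j i"
  by (simp add: gen_pos)

lemma inj_gen: "-1 \<le> j \<Longrightarrow> inj (gen j)"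
  by (metis gen_gen injI)

lemma signed_perm_id: "signed_perm id"
  by (auto simp: signed_perm_def)

lemma signed_perm_gen: "-1 \<le> j \<Longrightarrow> signed_perm (gen j)"
  unfolding signed_perm_def using inj_gen gen_uminus gen_fixes by blast

lemma signed_perm_comp:
  assumes "signed_perm u" "signed_perm v"
  shows "signed_perm (u \<circ> v)"
proof -
  obtain K L where "\<forall>n. K < \<bar>n\<bar> \<longrightarrow> u n = n" "\<forall>n. L < \<bar>n\<bar> \<longrightarrow> v n = n"
    using assms by (auto simp: signed_perm_def)
  then have "\<forall>n. max K L < \<bar>n\<bar> \<longrightarrow> (u \<circ> v) n = n" by simp
  moreover have "inj (u \<circ> v)" "\<forall>n. (u \<circ> v) (- n) = - (u \<circ> v) n"
    using assms by (auto simp: signed_perm_def intro: inj_compose)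
  ultimately show ?thesis unfolding signed_perm_def by blast
qed

lemma signed_perm_uminus: "signed_perm u \<Longrightarrow> u (- n) = - u n"
  by (simp add: signed_perm_def)

lemma signed_perm_0: "signed_perm u \<Longrightarrow> u 0 = 0"
  using signed_perm_uminus[of u 0] by simp

lemma signed_perm_eq_iff: "signed_perm u \<Longrightarrow> u m = u n \<longleftrightarrow> m = n"
  by (auto simp: signed_perm_def dest: injD)

lemma finite_inversions_signed_perm:
  assumes "signed_perm u"
  shows "finite (inversions UNIV u)"
proof -
  obtain K where K: "\<forall>n. K < \<bar>n\<bar> \<longrightarrow> u n = n" using assms by (auto simp: signed_perm_def)
  have "inversions UNIV u \<subseteq> {-K..K} \<times> {-K..K}"
    using assms K by (intro inversions_subset_interval) (auto simp: signed_perm_def)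
  then show ?thesis by (rule finite_subset) simp
qed

lemma invZ_eq_card_inversions: "invZ u = card (inversions UNIV u)"
  unfolding invZ_def inversions_def by (rule arg_cong[where f = card]) auto

lemma invZ_comp_gen:
  assumes "signed_perm u" "-1 \<le> j"
  shows "invZ (u \<circ> gen j) + card (inversions UNIV u \<inter> inversions UNIV (gen j))
       = invZ u + card (inversions UNIV (gen j) - inversions UNIV u)"
  unfolding invZ_eq_card_inversions
  using assms card_inversions_comp_involution[of UNIV "gen j" u]
    finite_inversions_signed_perm signed_perm_gen
  by (simp add: signed_perm_def)

lemma inversions_gen_0: "inversions UNIV (gen 0) = {(-1, 0), (-1, 1), (0, 1)}"
proof (intro equalityI subsetI)
  fix p assume "p \<in> inversions UNIV (gen 0)"
  then obtain a b where "p = (a, b)" "a < b" "gen 0 b < gen 0 a" by (auto simp: inversions_def)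
  then show "p \<in> {(-1, 0), (-1, 1), (0, 1)}" by (simp add: gen_0 split: if_splits)
qed (auto simp: inversions_def gen_0)

lemma inversions_gen_1: "inversions UNIV (gen 1) = {(1, 2), (-2, -1)}"
proof (intro equalityI subsetI)
  fix p assume "p \<in> inversions UNIV (gen 1)"
  then obtain a b where "p = (a, b)" "a < b" "gen 1 b < gen 1 a" by (auto simp: inversions_def)
  then show "p \<in> {(1, 2), (-2, -1)}" by (simp add: gen_pos split: if_splits)
qed (auto simp: inversions_def gen_pos)

lemma inversions_gen_m1:
  "inversions UNIV (gen (-1)) = {(-2, 0), (-2, 1), (-2, 2), (-1, 0), (-1, 1), (-1, 2), (0, 1), (0, 2)}"
proof (intro equalityI subsetI)
  fix p assume "p \<in> inversions UNIV (gen (-1))"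
  then obtain a b where "p = (a, b)" "a < b" "gen (-1) b < gen (-1) a" by (auto simp: inversions_def)
  then show "p \<in> {(-2, 0), (-2, 1), (-2, 2), (-1, 0), (-1, 1), (-1, 2), (0, 1), (0, 2)}"
    by (simp add: gen_m1 split: if_splits)
qed (auto simp: inversions_def gen_m1)

lemma finite_ell0_set:
  assumes "signed_perm u"
  shows "finite {i. 0 < i \<and> u i < 0}"
proof -
  obtain K where K: "\<forall>n. K < \<bar>n\<bar> \<longrightarrow> u n = n" using assms by (auto simp: signed_perm_def)
  have "{i. 0 < i \<and> u i < 0} \<subseteq> {0..K}"
  proof
    fix i assume i: "i \<in> {i. 0 < i \<and> u i < 0}"
    show "i \<in> {0..K}"
    proof (rule ccontr)
      assume "i \<notin> {0..K}"
      then have "u i = i" using i K by auto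
      then show False using i by auto
    qed
  qed
  then show ?thesis using finite_subset by blast
qed

lemma ell0_le_invZ:
  assumes "signed_perm u"
  shows "ell0 u \<le> invZ u"
proof -
  have "(\<lambda>i. (- i, i)) ` {i. 0 < i \<and> u i < 0} \<subseteq> inversions UNIV u"
    using signed_perm_uminus[OF assms] by (auto simp: inversions_def)
  moreover have "inj_on (\<lambda>i::int. (- i, i)) {i. 0 < i \<and> u i < 0}" by (auto simp: inj_on_def)
  ultimately show ?thesis unfolding ell0_def invZ_eq_card_inversions
    by (metis card_image card_mono finite_inversions_signed_perm[OF assms])
qed

lemma ell0_comp_gen_pos:
  assumes "signed_perm u" "1 \<le> j"
  shows "ell0 (u \<circ> gen j) = ell0 u"
proof -
  have j: "-1 \<le> j" using assms(2) by simp
  have "{i. 0 < i \<and> (u \<circ> gen j) i < 0} = gen j ` {i. 0 < i \<and> u i < 0}"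
  proof (intro equalityI subsetI)
    fix i assume i: "i \<in> {i. 0 < i \<and> (u \<circ> gen j) i < 0}"
    have "gen j i \<in> {i. 0 < i \<and> u i < 0}" using i gen_pos_pos[OF assms(2)] by simp
    moreover have "i = gen j (gen j i)" using gen_gen[OF j] by simp
    ultimately show "i \<in> gen j ` {i. 0 < i \<and> u i < 0}" by (rule rev_image_eqI)
  next
    fix i assume "i \<in> gen j ` {i. 0 < i \<and> u i < 0}"
    then obtain k where "i = gen j k" "0 < k" "u k < 0" by blast
    then show "i \<in> {i. 0 < i \<and> (u \<circ> gen j) i < 0}"
      using gen_pos_pos[OF assms(2)] gen_gen[OF j] by simp
  qed
  then show ?thesis unfolding ell0_def using inj_gen[OF j] by (simp add: card_image inj_on_subset)
qed

text \<open>The lengths \<open>(inv \<plusminus> \<ell>\<^sub>0) / 2\<close> involve integer division, so an ascent is detected by a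
  growth of at least 2 in the numerator.\<close>

lemma nat_div2_less: "0 \<le> (x::int) \<Longrightarrow> x + 2 \<le> y \<Longrightarrow> nat (x div 2) < nat (y div 2)"
  using zdiv_mono1[of "x + 2" y 2] by simp

lemma lenX_D_less:
  "ell0 u \<le> invZ u \<Longrightarrow> int (invZ u) - int (ell0 u) + 2 \<le> int (invZ v) - int (ell0 v)
   \<Longrightarrow> lenX D u < lenX D v"
  unfolding lenX_def using nat_div2_less[of "int (invZ u) - int (ell0 u)"] by simp

lemma lenX_BC_less:
  "X \<noteq> D \<Longrightarrow> int (invZ u) + int (ell0 u) + 2 \<le> int (invZ v) + int (ell0 v)
   \<Longrightarrow> lenX X u < lenX X v"
  unfolding lenX_def using nat_div2_less[of "int (invZ u) + int (ell0 u)"] by simp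

lemma lenX_ascent_gen_0:
  assumes "signed_perm u" "0 < u 1" "X \<noteq> D"
  shows "lenX X u < lenX X (u \<circ> gen 0)"
proof -
  have "inversions UNIV u \<inter> inversions UNIV (gen 0) = {}"
    using assms(2) signed_perm_0[OF assms(1)] signed_perm_uminus[OF assms(1), of 1]
    unfolding inversions_gen_0 by (auto simp: inversions_def)
  moreover from this have "inversions UNIV (gen 0) - inversions UNIV u = inversions UNIV (gen 0)"
    by blast
  ultimately have "invZ (u \<circ> gen 0) = invZ u + 3"
    using invZ_comp_gen[OF assms(1), of 0] by (simp add: inversions_gen_0)
  moreover have "ell0 u \<le> ell0 (u \<circ> gen 0)"
    unfolding ell0_def
  proof (rule card_mono)
    show "finite {i. 0 < i \<and> (u \<circ> gen 0) i < 0}"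
      using finite_ell0_set[OF signed_perm_comp[OF assms(1) signed_perm_gen]] by simp
    show "{i. 0 < i \<and> u i < 0} \<subseteq> {i. 0 < i \<and> (u \<circ> gen 0) i < 0}"
      using assms(2) by (auto simp: gen_0)
  qed
  ultimately show ?thesis using assms(3) by (intro lenX_BC_less) auto
qed

lemma lenX_D_ascent_gen_1:
  assumes "signed_perm u" "u 1 < u 2"
  shows "lenX D u < lenX D (u \<circ> gen 1)"
proof -
  have "inversions UNIV u \<inter> inversions UNIV (gen 1) = {}"
    using assms(2) signed_perm_uminus[OF assms(1), of 1] signed_perm_uminus[OF assms(1), of 2]
    unfolding inversions_gen_1 by (auto simp: inversions_def)
  moreover from this have "inversions UNIV (gen 1) - inversions UNIV u = inversions UNIV (gen 1)"
    by blast
  ultimately have "invZ (u \<circ> gen 1) = invZ u + 2"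
    using invZ_comp_gen[OF assms(1), of 1] by (simp add: inversions_gen_1)
  moreover have "ell0 (u \<circ> gen 1) = ell0 u" using ell0_comp_gen_pos[OF assms(1)] by simp
  ultimately show ?thesis using ell0_le_invZ[OF assms(1)] by (intro lenX_D_less) auto
qed

lemma ell0_eq_card_beyond_2:
  assumes "finite {i. 2 < i \<and> v i < 0}"
  shows "ell0 v = card {i. 2 < i \<and> v i < 0} + (if v 1 < 0 then 1 else 0) + (if v 2 < 0 then 1 else 0)"
proof -
  have split: "{i. 0 < i \<and> v i < 0} = {i. 2 < i \<and> v i < 0} \<union> ({1, 2} \<inter> {i. v i < 0})" by auto
  have "card ({1, 2} \<inter> {i. v i < 0}) = (if v 1 < 0 then 1 else 0) + (if v 2 < 0 then 1 else 0)"
    by (auto simp: Int_insert_left)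
  moreover have "card ({i. 2 < i \<and> v i < 0} \<union> ({1, 2} \<inter> {i. v i < 0})) =
      card {i. 2 < i \<and> v i < 0} + card ({1, 2} \<inter> {i. v i < 0})"
    using assms by (intro card_Un_disjoint) auto
  ultimately show ?thesis unfolding ell0_def split by simp
qed

lemma ell0_comp_gen_m1:
  assumes "signed_perm u"
  shows "ell0 (u \<circ> gen (-1)) + (if u 1 < 0 then 1 else 0) + (if u 2 < 0 then 1 else 0)
       = ell0 u + (if 0 < u 1 then 1 else 0) + (if 0 < u 2 then 1 else 0)"
proof -
  let ?R = "{i. 2 < i \<and> u i < 0}"
  have "finite ?R" using finite_ell0_set[OF assms] by (rule finite_subset[rotated]) auto
  moreover have "{i. 2 < i \<and> (u \<circ> gen (-1)) i < 0} = ?R" by (auto simp: gen_m1)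
  ultimately show ?thesis
    using ell0_eq_card_beyond_2[of u] ell0_eq_card_beyond_2[of "u \<circ> gen (-1)"] signed_perm_uminus[OF assms]
    by (simp add: gen_m1)
qed

lemma lenX_D_ascent_gen_m1:
  assumes "signed_perm u" "0 < u 1 + u 2"
  shows "lenX D u < lenX D (u \<circ> gen (-1))"
proof -
  let ?T = "inversions UNIV (gen (-1))"
  have u0: "u 0 = 0" and um: "u (-1) = - u 1" "u (-2) = - u 2"
    using signed_perm_0[OF assms(1)] signed_perm_uminus[OF assms(1)] by auto
  have "u 1 \<noteq> 0" "u 2 \<noteq> 0" using signed_perm_eq_iff[OF assms(1)] u0 by (metis one_neq_zero, metis zero_neq_numeral)
  have inv: "invZ (u \<circ> gen (-1)) + card (inversions UNIV u \<inter> ?T) = invZ u + card (?T - inversions UNIV u)"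
    using invZ_comp_gen[OF assms(1), of "-1"] by simp
  note ell = ell0_comp_gen_m1[OF assms(1)] and le = ell0_le_invZ[OF assms(1)]
  consider "0 < u 1" "0 < u 2" | "u 1 < 0" "0 < u 2" | "0 < u 1" "u 2 < 0"
    using \<open>u 1 \<noteq> 0\<close> \<open>u 2 \<noteq> 0\<close> assms(2) by linarith
  then show ?thesis
  proof cases
    case 1
    then have "inversions UNIV u \<inter> ?T = {}" "?T - inversions UNIV u = ?T"
      using u0 um unfolding inversions_gen_m1 by (auto simp: inversions_def)
    then have "invZ (u \<circ> gen (-1)) = invZ u + 8" using inv by (simp add: inversions_gen_m1)
    then show ?thesis using ell le 1 by (intro lenX_D_less) auto
  next
    case 2
    then have "inversions UNIV u \<inter> ?T = {(-1, 0), (-1, 1), (0, 1)}"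
      "?T - inversions UNIV u = {(-2, 0), (-2, 1), (-2, 2), (-1, 2), (0, 2)}"
      using u0 um assms(2) unfolding inversions_gen_m1 by (auto simp: inversions_def)
    then have "invZ (u \<circ> gen (-1)) = invZ u + 2" using inv by simp
    then show ?thesis using ell le 2 by (intro lenX_D_less) auto
  next
    case 3
    then have "inversions UNIV u \<inter> ?T = {(-2, 0), (-2, 2), (0, 2)}"
      "?T - inversions UNIV u = {(-2, 1), (-1, 0), (-1, 1), (-1, 2), (0, 1)}"
      using u0 um assms(2) unfolding inversions_gen_m1 by (auto simp: inversions_def)
    then have "invZ (u \<circ> gen (-1)) = invZ u + 2" using inv by simp
    then show ?thesis using ell le 3 by (intro lenX_D_less) auto
  qed
qed

section \<open>Type A inside the signed permutations\<close>

text \<open>The embedding \<open>s\<^sub>i \<mapsto> t\<^sub>i\<close> of \<open>S\<^sub>\<infinity>\<close> into \<open>W\<^sup>B\<^sub>\<infinity>\<close>: a permutation of \<open>{1, 2, ...}\<close> acts on negative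
  integers by \<open>\<sigma>(-n) = -\<sigma>(n)\<close>.\<close>

definition lift_perm :: "(nat \<Rightarrow> nat) \<Rightarrow> int \<Rightarrow> int" where
  "lift_perm \<sigma> n = (if 0 \<le> n then int (\<sigma> (nat n)) else - int (\<sigma> (nat (- n))))"

lemma lift_perm_int [simp]: "lift_perm \<sigma> (int n) = int (\<sigma> n)"
  by (simp add: lift_perm_def)

lemma lift_perm_id: "lift_perm id = id"
  by (auto simp: lift_perm_def)

lemma lift_perm_inject: "lift_perm \<sigma> = lift_perm \<tau> \<Longrightarrow> \<sigma> = \<tau>"
  by (metis lift_perm_int of_nat_eq_iff ext)

lemma lift_perm_pos: "finitary_perm \<sigma> \<Longrightarrow> 0 < n \<Longrightarrow> 0 < lift_perm \<sigma> n"
  using finitary_perm_pos[of \<sigma> "nat n"] by (simp add: lift_perm_def)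

lemma gen_int: "1 \<le> k \<Longrightarrow> gen (int k) (int m) = int (sA k m)"
  by (auto simp: gen_pos sA_def)

lemma lift_perm_comp_sA:
  assumes "1 \<le> k"
  shows "lift_perm (u \<circ> sA k) = lift_perm u \<circ> gen (int k)"
proof
  fix n :: int
  have k: "-1 \<le> int k" using assms by simp
  show "lift_perm (u \<circ> sA k) n = (lift_perm u \<circ> gen (int k)) n"
  proof (cases "0 \<le> n")
    case True
    then show ?thesis using gen_int[OF assms, of "nat n"] by (simp add: lift_perm_def)
  next
    case False
    have "gen (int k) n = - int (sA k (nat (- n)))"
      using gen_int[OF assms, of "nat (- n)"] gen_uminus[OF k, of "- n"] False by simp
    moreover have "0 < sA k (nat (- n))" using sA_pos[OF assms] False by simp
    ultimately show ?thesis using False by (simp add: lift_perm_def)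
  qed
qed

lemma gen_comp_lift_perm:
  assumes "1 \<le> k"
  shows "gen (int k) \<circ> lift_perm u = lift_perm (sA k \<circ> u)"
proof
  fix n :: int
  have k: "-1 \<le> int k" using assms by simp
  show "(gen (int k) \<circ> lift_perm u) n = lift_perm (sA k \<circ> u) n"
    using gen_int[OF assms] gen_uminus[OF k] by (simp add: lift_perm_def)
qed

lemma finitary_perm_wordS: "\<forall>i\<in>set ws. 1 \<le> i \<Longrightarrow> finitary_perm (wordS ws)"
  by (induction ws) (auto simp: wordS_def finitary_perm_id finitary_perm_sA finitary_perm_comp)

lemma wordT_eq_lift_perm_wordS: "\<forall>i\<in>set ws. 1 \<le> i \<Longrightarrow> wordT ws = lift_perm (wordS ws)"
  by (induction ws) (simp_all add: wordT_def wordS_def lift_perm_id gen_comp_lift_perm)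

lemma ell0_lift_perm:
  assumes "finitary_perm \<sigma>"
  shows "ell0 (lift_perm \<sigma>) = 0"
proof -
  have "{i. 0 < i \<and> lift_perm \<sigma> i < 0} = {}" using lift_perm_pos[OF assms] by force
  then show ?thesis unfolding ell0_def by (metis card.empty)
qed

lemma inversions_lift_perm:
  assumes "finitary_perm \<sigma>"
  shows "inversions UNIV (lift_perm \<sigma>) =
    (\<lambda>(i, j). (int i, int j)) ` inversions {0<..} \<sigma> \<union> (\<lambda>(i, j). (- int j, - int i)) ` inversions {0<..} \<sigma>"
proof (intro equalityI subsetI)
  fix p assume "p \<in> inversions UNIV (lift_perm \<sigma>)"
  then obtain i j where ij: "p = (i, j)" "i < j" "lift_perm \<sigma> j < lift_perm \<sigma> i"
    by (auto simp: inversions_def)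
  have "\<sigma> 0 = 0" using assms by (simp add: finitary_perm_def)
  then consider "0 < i" | "j < 0" using ij(2,3) by (fastforce simp: lift_perm_def not_less split: if_splits)
  then show "p \<in> (\<lambda>(i, j). (int i, int j)) ` inversions {0<..} \<sigma> \<union>
      (\<lambda>(i, j). (- int j, - int i)) ` inversions {0<..} \<sigma>"
  proof cases
    case 1
    then have "(nat i, nat j) \<in> inversions {0<..} \<sigma>" using ij by (simp add: inversions_def lift_perm_def)
    then show ?thesis using ij 1 by (auto intro!: image_eqI[of _ _ "(nat i, nat j)"])
  next
    case 2
    then have "(nat (- j), nat (- i)) \<in> inversions {0<..} \<sigma>"
      using ij by (simp add: inversions_def lift_perm_def)
    then show ?thesis using ij 2 by (auto intro!: image_eqI[of _ _ "(nat (- j), nat (- i))"])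
  qed
qed (auto simp: inversions_def lift_perm_def)

lemma invZ_lift_perm:
  assumes "finitary_perm \<sigma>"
  shows "invZ (lift_perm \<sigma>) = 2 * lenA \<sigma>"
proof -
  let ?I = "inversions {0<..} \<sigma>"
  let ?pos = "\<lambda>(i::nat, j::nat). (int i, int j)" and ?neg = "\<lambda>(i::nat, j::nat). (- int j, - int i)"
  have "inj_on ?pos ?I" "inj_on ?neg ?I" by (auto simp: inj_on_def)
  moreover have "?pos ` ?I \<inter> ?neg ` ?I = {}" by (auto simp: inversions_def)
  ultimately have "card (?pos ` ?I \<union> ?neg ` ?I) = 2 * card ?I"
    using finite_inversions_finitary[OF assms] by (simp add: card_Un_disjoint card_image)
  then show ?thesis by (simp add: invZ_eq_card_inversions inversions_lift_perm[OF assms] lenA_eq_card_inversions)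
qed

lemma lenX_lift_perm: "finitary_perm \<sigma> \<Longrightarrow> lenX X (lift_perm \<sigma>) = lenA \<sigma>"
  by (simp add: lenX_def invZ_lift_perm ell0_lift_perm)

lemma demX_step_lift_perm:
  assumes "finitary_perm u" "1 \<le> k"
  shows "demX_step X (lift_perm u) (int k) = lift_perm (demA_step u k)"
  using lift_perm_comp_sA[OF assms(2)] lenX_lift_perm[OF assms(1)]
    lenX_lift_perm[OF finitary_perm_comp[OF assms(1) finitary_perm_sA[OF assms(2)]]]
  by (simp add: demX_step_def demA_step_def Let_def del: lenX_def)

lemma foldl_demX_step_lift_perm:
  "finitary_perm u \<Longrightarrow> \<forall>k\<in>set a. 1 \<le> k \<Longrightarrow>
   foldl (demX_step X) (lift_perm u) (map int a) = lift_perm (foldl demA_step u a)"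
  by (induction a arbitrary: u) (simp_all add: demX_step_lift_perm finitary_perm_demA_step)

lemma demX_map_int: "\<forall>k\<in>set a. 1 \<le> k \<Longrightarrow> demX X (map int a) = lift_perm (demA a)"
  unfolding demX_def demA_def using foldl_demX_step_lift_perm[OF finitary_perm_id] lift_perm_id by metis

section \<open>Hecke words of type A elements in types B, C and D\<close>

text \<open>Once the letter \<open>0\<close> has been used, the Demazure product sends some positive integer to a
  negative one, and right multiplication by \<open>t\<^sub>j\<close>, \<open>j \<ge> 1\<close>, keeps it so. Once one of \<open>\<plusminus>1\<close> has been
  used in type D, the product moreover sends a positive integer to a negative one or moves \<open>1\<close>
  upwards, and the letters \<open>j \<ge> 2\<close> keep it so. The lift of a type A element does neither when
  it fixes \<open>1\<close>.\<close>

definition negates_positive :: "(int \<Rightarrow> int) \<Rightarrow> bool" where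
  "negates_positive u \<longleftrightarrow> (\<exists>i>0. u i < 0)"

definition moves_one :: "(int \<Rightarrow> int) \<Rightarrow> bool" where
  "moves_one u \<longleftrightarrow> negates_positive u \<or> 1 < u 1"

lemma negates_positive_if_1_or_2: "u 1 < 0 \<or> u 2 < 0 \<Longrightarrow> negates_positive u"
  by (auto simp: negates_positive_def intro: exI[of _ 1] exI[of _ 2])

lemma demX_step_eq: "demX_step X u j = (if lenX X u < lenX X (u \<circ> gen j) then u \<circ> gen j else u)"
  by (simp add: demX_step_def Let_def)

lemma comp_gen_gen [simp]: "-1 \<le> j \<Longrightarrow> u \<circ> gen j \<circ> gen j = u"
  by (simp add: fun_eq_iff)

lemma signed_perm_demX_step: "signed_perm u \<Longrightarrow> -1 \<le> j \<Longrightarrow> signed_perm (demX_step X u j)"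
  by (simp add: demX_step_eq signed_perm_comp signed_perm_gen)

lemma negates_positive_comp_gen:
  assumes "negates_positive u" "1 \<le> j"
  shows "negates_positive (u \<circ> gen j)"
proof -
  obtain i where "0 < i" "u i < 0" using assms(1) by (auto simp: negates_positive_def)
  moreover have "(u \<circ> gen j) (gen j i) = u i" using assms(2) by simp
  ultimately show ?thesis
    using gen_pos_pos[OF assms(2)] unfolding negates_positive_def by metis
qed

lemma negates_positive_demX_step: "negates_positive u \<Longrightarrow> 1 \<le> j \<Longrightarrow> negates_positive (demX_step X u j)"
  by (simp add: demX_step_eq negates_positive_comp_gen)

lemma pos_if_not_negates_positive:
  assumes "signed_perm u" "\<not> negates_positive u" "0 < i"
  shows "0 < u i"
proof -
  have "u i \<noteq> 0" using signed_perm_eq_iff[OF assms(1), of i 0] signed_perm_0[OF assms(1)] assms(3) by simp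
  then show ?thesis using assms(2,3) by (force simp: negates_positive_def)
qed

lemma negates_positive_demX_step_0:
  assumes "signed_perm u" "X \<noteq> D"
  shows "negates_positive (demX_step X u 0)"
proof -
  have um: "u (-1) = - u 1" using signed_perm_uminus[OF assms(1)] by simp
  have "u 1 \<noteq> 0" using signed_perm_eq_iff[OF assms(1), of 1 0] signed_perm_0[OF assms(1)] by simp
  then consider "0 < u 1" | "u 1 < 0" by linarith
  then show ?thesis
  proof cases
    case 1
    then have "demX_step X u 0 = u \<circ> gen 0"
      using lenX_ascent_gen_0[OF assms(1) 1 assms(2)] by (simp add: demX_step_eq)
    then show ?thesis using 1 um by (intro negates_positive_if_1_or_2) (simp add: gen_0)
  next
    case 2
    have "lenX X (u \<circ> gen 0) < lenX X u"
      using lenX_ascent_gen_0[OF signed_perm_comp[OF assms(1) signed_perm_gen], of 0 X] 2 um assms(2)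
      by (simp add: gen_0)
    then have "demX_step X u 0 = u" by (simp add: demX_step_eq)
    then show ?thesis using 2 by (simp add: negates_positive_if_1_or_2)
  qed
qed

lemma moves_one_demX_step_1:
  assumes "signed_perm u"
  shows "moves_one (demX_step D u 1)"
proof (cases "negates_positive u")
  case True
  then show ?thesis by (simp add: moves_one_def negates_positive_demX_step)
next
  case False
  have pos: "0 < u 1" "0 < u 2" using pos_if_not_negates_positive[OF assms False] by auto
  have "u 1 \<noteq> u 2" using signed_perm_eq_iff[OF assms, of 1 2] by simp
  then consider "u 1 < u 2" | "u 2 < u 1" by linarith
  then show ?thesis
  proof cases
    case 1
    then have "demX_step D u 1 = u \<circ> gen 1"
      using lenX_D_ascent_gen_1[OF assms] by (simp add: demX_step_eq)
    then show ?thesis using 1 pos by (simp add: moves_one_def gen_pos)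
  next
    case 2
    then have "lenX D (u \<circ> gen 1) < lenX D u"
      using lenX_D_ascent_gen_1[OF signed_perm_comp[OF assms signed_perm_gen], of 1] by (simp add: gen_pos)
    then have "demX_step D u 1 = u" by (simp add: demX_step_eq)
    then show ?thesis using 2 pos by (simp add: moves_one_def)
  qed
qed

lemma moves_one_demX_step_m1:
  assumes "signed_perm u"
  shows "moves_one (demX_step D u (-1))"
proof -
  have um: "u (-1) = - u 1" "u (-2) = - u 2" using signed_perm_uminus[OF assms] by auto
  have "u 1 \<noteq> u (-2)" using signed_perm_eq_iff[OF assms, of 1 "-2"] by simp
  then have ne: "u 1 + u 2 \<noteq> 0" using um by simp
  have v: "(u \<circ> gen (-1)) 1 = - u 2" "(u \<circ> gen (-1)) 2 = - u 1" using um by (auto simp: gen_m1)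
  consider "0 < u 1 + u 2" | "u 1 + u 2 < 0" using ne by linarith
  then show ?thesis
  proof cases
    case 1
    then have "demX_step D u (-1) = u \<circ> gen (-1)"
      using lenX_D_ascent_gen_m1[OF assms] by (simp add: demX_step_eq)
    moreover have "negates_positive (u \<circ> gen (-1))"
      using 1 v by (intro negates_positive_if_1_or_2) linarith
    ultimately show ?thesis by (simp add: moves_one_def)
  next
    case 2
    then have "lenX D (u \<circ> gen (-1)) < lenX D u"
      using lenX_D_ascent_gen_m1[OF signed_perm_comp[OF assms signed_perm_gen], of "-1"] v by simp
    then have "demX_step D u (-1) = u" by (simp add: demX_step_eq)
    moreover have "negates_positive u"
      using 2 by (intro negates_positive_if_1_or_2) linarith
    ultimately show ?thesis by (simp add: moves_one_def)
  qed
qed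

lemma moves_one_demX_step_ge2:
  assumes "moves_one u" "2 \<le> j"
  shows "moves_one (demX_step D u j)"
proof -
  have "(u \<circ> gen j) 1 = u 1" using assms(2) by (simp add: gen_pos)
  then show ?thesis
    using assms negates_positive_comp_gen[of u j] by (auto simp: demX_step_eq moves_one_def)
qed

lemma negates_positive_foldl_demX_step:
  assumes "signed_perm u" "X \<noteq> D" "\<forall>j\<in>set a. 0 \<le> j" "0 \<in> set a \<or> negates_positive u"
  shows "negates_positive (foldl (demX_step X) u a)"
  using assms
proof (induction a arbitrary: u)
  case (Cons j a)
  have "0 \<in> set a \<or> negates_positive (demX_step X u j)"
    using Cons.prems negates_positive_demX_step_0 negates_positive_demX_step[of u j]
    by (cases "j = 0") auto
  then show ?case using Cons by (simp add: signed_perm_demX_step)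
qed simp

lemma moves_one_foldl_demX_step:
  assumes "signed_perm u" "\<forall>j\<in>set a. letterX D j" "-1 \<in> set a \<or> 1 \<in> set a \<or> moves_one u"
  shows "moves_one (foldl (demX_step D) u a)"
  using assms
proof (induction a arbitrary: u)
  case (Cons j a)
  have j: "j = -1 \<or> j = 1 \<or> 2 \<le> j" using Cons.prems(2) by (auto simp: letterX_def)
  then have "-1 \<in> set a \<or> 1 \<in> set a \<or> moves_one (demX_step D u j)"
    using Cons.prems moves_one_demX_step_1 moves_one_demX_step_m1 moves_one_demX_step_ge2 by auto
  then show ?case using Cons j by (auto simp: signed_perm_demX_step)
qed simp

lemma not_negates_positive_lift_perm: "finitary_perm \<sigma> \<Longrightarrow> \<not> negates_positive (lift_perm \<sigma>)"
  by (auto simp: negates_positive_def dest: lift_perm_pos)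

lemma HX_lift_perm_letters:
  assumes "finitary_perm \<sigma>" "X = D \<Longrightarrow> \<sigma> 1 = 1" "a \<in> HX X (lift_perm \<sigma>)" "j \<in> set a"
  shows "1 \<le> j \<and> (X = D \<longrightarrow> 2 \<le> j)"
proof -
  have product: "foldl (demX_step X) id a = lift_perm \<sigma>" and letters: "\<forall>j\<in>set a. letterX X j"
    using assms(3) by (auto simp: HX_def demX_def)
  have not_neg: "\<not> negates_positive (lift_perm \<sigma>)" using not_negates_positive_lift_perm[OF assms(1)] .
  show ?thesis
  proof (cases "X = D")
    case True
    have "\<not> moves_one (lift_perm \<sigma>)"
      using not_neg assms(2) True by (simp add: moves_one_def lift_perm_def)
    then have "-1 \<notin> set a \<and> 1 \<notin> set a"
      using moves_one_foldl_demX_step[OF signed_perm_id, of a] letters product True by auto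
    then have "j \<noteq> -1" "j \<noteq> 1" using assms(4) by metis+
    moreover have "j = -1 \<or> 1 \<le> j" using letters assms(4) True by (simp add: letterX_def)
    ultimately show ?thesis using True by auto
  next
    case False
    have "0 \<notin> set a"
      using negates_positive_foldl_demX_step[OF signed_perm_id False, of a] letters product not_neg False
      by (auto simp: letterX_def)
    moreover have "0 \<le> j" using letters assms(4) False by (simp add: letterX_def)
    ultimately show ?thesis using assms(4) False by (metis int_one_le_iff_zero_less order_le_less)
  qed
qed

lemma HX_lift_perm:
  assumes "finitary_perm \<sigma>" "X = D \<Longrightarrow> \<sigma> 1 = 1"
  shows "HX X (lift_perm \<sigma>) = map int ` HA \<sigma>"
proof (intro equalityI subsetI)
  fix a assume a: "a \<in> HX X (lift_perm \<sigma>)"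
  have pos: "\<forall>j\<in>set a. 1 \<le> j" using HX_lift_perm_letters[OF assms a] by blast
  define b where "b = map nat a"
  have ab: "a = map int b" unfolding b_def using pos by (induction a) auto
  have b: "\<forall>k\<in>set b. 1 \<le> k" using pos by (auto simp: b_def)
  have "lift_perm (demA b) = lift_perm \<sigma>" using a demX_map_int[OF b, of X] by (simp add: HX_def ab)
  then have "b \<in> HA \<sigma>" using b lift_perm_inject by (auto simp: HA_def)
  then show "a \<in> map int ` HA \<sigma>" using ab by simp
next
  fix a assume "a \<in> map int ` HA \<sigma>"
  then obtain b where "a = map int b" "\<forall>k\<in>set b. 1 \<le> k" "demA b = \<sigma>" by (auto simp: HA_def)
  then show "a \<in> HX X (lift_perm \<sigma>)" using demX_map_int by (auto simp: HX_def letterX_def)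
qed

section \<open>Counting sign choices\<close>

text \<open>For a word \<open>a\<close> and a weakly increasing \<open>b\<close> the sequences \<open>s \<in> U(a)\<close> with \<open>|s| = b\<close> are the
  ways of attaching signs to \<open>b\<close>: within a maximal block of equal entries of \<open>b\<close> the negative
  entries come first, under a strictly decreasing part of \<open>a\<close>, followed by the positive ones,
  under a strictly increasing part. There are \<open>2\<^sup>|\<^sup>b\<^sup>| \<^sup>- \<^sup>\<gamma>\<^sup>(\<^sup>a\<^sup>,\<^sup>b\<^sup>)\<close> of them when no block of \<open>b\<close>
  carries a peak of \<open>a\<close>, and none otherwise. The count is established by induction from the
  left, keeping track separately of the sign of the first entry.\<close>

abbreviation nat_abs :: "int \<Rightarrow> nat" where "nat_abs x \<equiv> nat \<bar>x\<bar>"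

definition UK_fibre :: "nat list \<Rightarrow> nat list \<Rightarrow> int list set" where
  "UK_fibre a b = {s. UK a s \<and> map nat_abs s = b}"

definition UK_fibre_hd :: "int \<Rightarrow> nat list \<Rightarrow> nat list \<Rightarrow> int list set" where
  "UK_fibre_hd sg a b = {s \<in> UK_fibre a b. hd s = sg * int (hd b)}"

definition CX_weight :: "nat list \<Rightarrow> nat list \<Rightarrow> rat" where
  "CX_weight a b =
     (if CX C (map int a) b then 2 powi (int (card (set b)) - int (gamma (map int a) b)) else 0)"

fun first_block_increasing :: "nat list \<Rightarrow> nat list \<Rightarrow> bool" where
  "first_block_increasing (x # y # a) (v # w # b) = (v < w \<or> x < y \<and> first_block_increasing (y # a) (w # b))"
| "first_block_increasing _ _ = True"

lemma all_nat_split: "(\<forall>n::nat. P n) \<longleftrightarrow> P 0 \<and> (\<forall>n. P (Suc n))"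
  by (metis not0_implies_Suc)

lemma UK_Cons_Cons:
  "UK (x # y # a) (s # t # r) \<longleftrightarrow>
     s \<noteq> 0 \<and> prec_rank s \<le> prec_rank t \<and> (s = t \<and> s < 0 \<longrightarrow> y < x) \<and> (s = t \<and> 0 < s \<longrightarrow> x < y)
     \<and> UK (y # a) (t # r)"
  unfolding UK_def
  apply (subst (1 2) all_nat_split)
  apply (simp only: sorted2 list.map)
  by auto

lemma CX_C_single: "CX C [x] [v] \<longleftrightarrow> 1 \<le> v"
  by (simp add: CX_def)

lemma CX_C_Cons_Cons:
  assumes "length b = length a"
  shows "CX C (map int (x # y # a)) (v # w # b) \<longleftrightarrow>
     1 \<le> v \<and> v \<le> w \<and> (a \<noteq> [] \<and> x \<le> y \<and> hd a \<le> y \<longrightarrow> v < hd b) \<and> CX C (map int (y # a)) (w # b)"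
  unfolding CX_def
  apply (subst (1) all_nat_split)
  using assms by (cases a; cases b) (auto simp: sorted2 nth_Cons' numeral_2_eq_2)

lemma gamma_single: "gamma [x] [v] = 0"
  by (simp add: gamma_def)

lemma gamma_Cons_Cons:
  "gamma (x # y # a) (v # w # b) = (if x = y \<and> v = w then 1 else 0) + gamma (y # a) (w # b)"
proof -
  let ?S = "{i. i + 1 < length (x # y # a) \<and> (x # y # a) ! i = (x # y # a) ! (i + 1)
                \<and> (v # w # b) ! i = (v # w # b) ! (i + 1)}"
  let ?T = "{i. i + 1 < length (y # a) \<and> (y # a) ! i = (y # a) ! (i + 1) \<and> (w # b) ! i = (w # b) ! (i + 1)}"
  have S: "?S = (if x = y \<and> v = w then {0} else {}) \<union> Suc ` ?T"
  proof (intro equalityI subsetI)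
    fix i assume "i \<in> ?S"
    then show "i \<in> (if x = y \<and> v = w then {0} else {}) \<union> Suc ` ?T" by (cases i) auto
  qed (auto split: if_splits)
  have "finite ?T" by (rule finite_subset[of _ "{..<length (y # a)}"]) auto
  then show ?thesis unfolding gamma_def S by (simp add: card_image card_insert_if)
qed

lemma card_set_Cons_Cons:
  assumes "sorted (v # w # b)"
  shows "card (set (v # w # b)) = card (set (w # b)) + (if v = w then 0 else 1)"
proof -
  have "v = w \<or> v \<notin> set (w # b)" using assms by (auto simp: sorted2)
  then show ?thesis by auto
qed

lemma CX_weight_Nil: "CX_weight [] [] = 1"
  by (simp add: CX_weight_def CX_def gamma_def)

lemma CX_weight_single: "1 \<le> v \<Longrightarrow> CX_weight [x] [v] = 2"
  by (simp add: CX_weight_def CX_C_single gamma_single)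

lemma CX_weight_Cons_Cons_less:
  assumes "length b = length a" "sorted (v # w # b)" "1 \<le> v" "v < w"
  shows "CX_weight (x # y # a) (v # w # b) = 2 * CX_weight (y # a) (w # b)"
proof -
  have "a \<noteq> [] \<longrightarrow> v < hd b" using assms by (cases b) auto
  then have CX: "CX C (map int (x # y # a)) (v # w # b) \<longleftrightarrow> CX C (map int (y # a)) (w # b)"
    using CX_C_Cons_Cons[OF assms(1)] assms(3,4) by auto
  have gamma: "gamma (map int (x # y # a)) (v # w # b) = gamma (map int (y # a)) (w # b)"
    using gamma_Cons_Cons[of "int x" "int y"] assms(4) by simp
  have card: "card (set (v # w # b)) = card (set (w # b)) + 1"
    using card_set_Cons_Cons[OF assms(2)] assms(4) by simp
  have "(2::rat) powi (int (n + 1) - g) = 2 * 2 powi (int n - g)" for n and g :: int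
    using power_int_add_1'[of "2::rat" "int n - g"] by (simp add: algebra_simps)
  then show ?thesis unfolding CX_weight_def CX gamma card by simp
qed

lemma CX_weight_Cons_Cons_eq:
  assumes "length b = length a" "sorted (v # v # b)" "1 \<le> v"
  shows "CX_weight (x # y # a) (v # v # b) =
    (if a \<noteq> [] \<and> x \<le> y \<and> hd a \<le> y \<longrightarrow> v < hd b
     then (if x = y then CX_weight (y # a) (v # b) / 2 else CX_weight (y # a) (v # b)) else 0)"
proof -
  have CX: "CX C (map int (x # y # a)) (v # v # b) \<longleftrightarrow>
      (a \<noteq> [] \<and> x \<le> y \<and> hd a \<le> y \<longrightarrow> v < hd b) \<and> CX C (map int (y # a)) (v # b)"
    using CX_C_Cons_Cons[OF assms(1)] assms(3) by simp
  have gamma: "gamma (map int (x # y # a)) (v # v # b) =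
      (if x = y then 1 else 0) + gamma (map int (y # a)) (v # b)"
    using gamma_Cons_Cons[of "int x" "int y"] by simp
  have "(2::rat) powi (k - (1 + g)) = 2 powi (k - g) / 2" for k g :: int
    using power_int_add_1'[of "2::rat" "k - (1 + g)"] by (simp add: algebra_simps)
  then show ?thesis unfolding CX_weight_def CX gamma by simp
qed

lemma not_CX_C_if_first_block_not_increasing:
  assumes "length b = length a" "sorted (v # v # b)" "x \<le> y" "\<not> first_block_increasing (y # a) (v # b)"
  shows "\<not> CX C (map int (x # y # a)) (v # v # b)"
  using assms
proof (induction a arbitrary: x y b)
  case (Cons z a)
  then obtain w b' where b: "b = w # b'" by (cases b) auto
  have "w = v" using Cons.prems(2,4) b by auto
  then have not_incr: "\<not> (y < z \<and> first_block_increasing (z # a) (v # b'))" using Cons.prems(4) b by simp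
  show ?case
  proof (cases "y < z")
    case True
    then have "\<not> CX C (map int (y # z # a)) (v # v # b')"
      using Cons.IH[where x = y and y = z and b = b'] Cons.prems b \<open>w = v\<close> not_incr by simp
    then show ?thesis using CX_C_Cons_Cons[of "v # b'" "z # a" x y v v] Cons.prems(1) b \<open>w = v\<close> by simp
  next
    case False
    then show ?thesis using CX_C_Cons_Cons[of "v # b'" "z # a" x y v v] Cons.prems(1,3) b \<open>w = v\<close> by simp
  qed
qed simp

definition UK_step :: "nat \<Rightarrow> nat \<Rightarrow> int \<Rightarrow> int \<Rightarrow> bool" where
  "UK_step x y s t \<longleftrightarrow> prec_rank s \<le> prec_rank t \<and> (s = t \<and> s < 0 \<longrightarrow> y < x) \<and> (s = t \<and> 0 < s \<longrightarrow> x < y)"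

lemma finite_map_nat_abs_eq: "finite {s. map nat_abs s = b}"
proof (induction b)
  case (Cons v b)
  have "{s. map nat_abs s = v # b} \<subseteq> (\<lambda>(h, t). h # t) ` ({int v, - int v} \<times> {s. map nat_abs s = b})"
    by (auto simp: map_eq_Cons_conv image_iff abs_if split: if_splits)
  moreover have "finite ((\<lambda>(h, t). h # t) ` ({int v, - int v} \<times> {s. map nat_abs s = b}))"
    using Cons.IH by simp
  ultimately show ?case by (rule finite_subset)
qed simp

lemma finite_UK_fibre: "finite (UK_fibre a b)"
  unfolding UK_fibre_def by (rule finite_subset[OF _ finite_map_nat_abs_eq[of b]]) auto

lemma UK_fibre_Nil: "UK_fibre [] [] = {[]}"
  by (auto simp: UK_fibre_def UK_def)

lemma UK_fibre_single: "1 \<le> v \<Longrightarrow> UK_fibre [x] [v] = {[int v], [- int v]}"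
  by (auto simp: UK_fibre_def UK_def length_Suc_conv)

lemma UK_fibre_Cons_Cons:
  "UK_fibre (x # y # a) (v # w # b) =
     {s # t | s t. t \<in> UK_fibre (y # a) (w # b) \<and> nat_abs s = v \<and> s \<noteq> 0 \<and> UK_step x y s (hd t)}"
proof (intro equalityI subsetI)
  fix r assume r: "r \<in> UK_fibre (x # y # a) (v # w # b)"
  then obtain s t t' where "r = s # t # t'" by (auto simp: UK_fibre_def UK_def length_Suc_conv)
  then show "r \<in> {s # t | s t. t \<in> UK_fibre (y # a) (w # b) \<and> nat_abs s = v \<and> s \<noteq> 0 \<and> UK_step x y s (hd t)}"
    using r by (auto simp: UK_fibre_def UK_Cons_Cons UK_step_def)
next
  fix r assume "r \<in> {s # t | s t. t \<in> UK_fibre (y # a) (w # b) \<and> nat_abs s = v \<and> s \<noteq> 0 \<and> UK_step x y s (hd t)}"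
  then obtain s t where r: "r = s # t" "t \<in> UK_fibre (y # a) (w # b)" "nat_abs s = v" "s \<noteq> 0"
    "UK_step x y s (hd t)" by auto
  then obtain t0 t' where "t = t0 # t'" by (auto simp: UK_fibre_def UK_def length_Suc_conv)
  then show "r \<in> UK_fibre (x # y # a) (v # w # b)"
    using r by (auto simp: UK_fibre_def UK_Cons_Cons UK_step_def)
qed

lemma hd_UK_fibre:
  assumes "t \<in> UK_fibre (y # a) (w # b)"
  shows "hd t = int w \<or> hd t = - int w"
  using assms by (auto simp: UK_fibre_def UK_def length_Suc_conv)

lemma card_UK_fibre_split:
  assumes "1 \<le> w"
  shows "card (UK_fibre (y # a) (w # b)) =
    card (UK_fibre_hd 1 (y # a) (w # b)) + card (UK_fibre_hd (-1) (y # a) (w # b))"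
proof -
  have split: "UK_fibre (y # a) (w # b) = UK_fibre_hd 1 (y # a) (w # b) \<union> UK_fibre_hd (-1) (y # a) (w # b)"
    using hd_UK_fibre[of _ y a w b] by (auto simp: UK_fibre_hd_def)
  have "card (UK_fibre_hd 1 (y # a) (w # b) \<union> UK_fibre_hd (-1) (y # a) (w # b)) =
      card (UK_fibre_hd 1 (y # a) (w # b)) + card (UK_fibre_hd (-1) (y # a) (w # b))"
    using assms finite_UK_fibre by (intro card_Un_disjoint) (auto simp: UK_fibre_hd_def)
  then show ?thesis by (simp only: split)
qed

lemma UK_fibre_hd_single: "1 \<le> v \<Longrightarrow> sg = 1 \<or> sg = -1 \<Longrightarrow> UK_fibre_hd sg [x] [v] = {[sg * int v]}"
  by (force simp: UK_fibre_hd_def UK_fibre_single)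

lemma card_UK_fibre_hd_Cons_Cons:
  assumes "1 \<le> v" "sg = 1 \<or> sg = -1"
  shows "card (UK_fibre_hd sg (x # y # a) (v # w # b)) =
    card {t \<in> UK_fibre (y # a) (w # b). UK_step x y (sg * int v) (hd t)}"
proof -
  have "UK_fibre_hd sg (x # y # a) (v # w # b) =
      Cons (sg * int v) ` {t \<in> UK_fibre (y # a) (w # b). UK_step x y (sg * int v) (hd t)}"
    using assms by (auto simp: UK_fibre_hd_def UK_fibre_Cons_Cons abs_mult)
  then show ?thesis by (simp add: card_image)
qed

lemma card_UK_fibre_hd_less:
  assumes "1 \<le> v" "v < w" "sg = 1 \<or> sg = -1"
  shows "card (UK_fibre_hd sg (x # y # a) (v # w # b)) = card (UK_fibre (y # a) (w # b))"
proof -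
  have "UK_step x y (sg * int v) (hd t)" if "t \<in> UK_fibre (y # a) (w # b)" for t
    using hd_UK_fibre[OF that] assms by (auto simp: UK_step_def prec_rank_def)
  then show ?thesis using card_UK_fibre_hd_Cons_Cons[OF assms(1,3)] by (metis (no_types, lifting) Collect_cong Collect_mem_eq)
qed

lemma card_UK_fibre_hd_pos_eq:
  assumes "1 \<le> v"
  shows "card (UK_fibre_hd 1 (x # y # a) (v # v # b)) =
    (if x < y then card (UK_fibre_hd 1 (y # a) (v # b)) else 0)"
proof -
  have "{t \<in> UK_fibre (y # a) (v # b). UK_step x y (1 * int v) (hd t)} =
      (if x < y then UK_fibre_hd 1 (y # a) (v # b) else {})"
  proof (intro equalityI subsetI)
    fix t assume t: "t \<in> {t \<in> UK_fibre (y # a) (v # b). UK_step x y (1 * int v) (hd t)}"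
    then have "hd t = int v \<or> hd t = - int v" using hd_UK_fibre by blast
    then show "t \<in> (if x < y then UK_fibre_hd 1 (y # a) (v # b) else {})"
      using t assms by (auto simp: UK_step_def prec_rank_def UK_fibre_hd_def)
  qed (use assms in \<open>auto simp: UK_step_def prec_rank_def UK_fibre_hd_def split: if_splits\<close>)
  then show ?thesis using card_UK_fibre_hd_Cons_Cons[OF assms, of 1] by simp
qed

lemma card_UK_fibre_hd_neg_eq:
  assumes "1 \<le> v"
  shows "card (UK_fibre_hd (-1) (x # y # a) (v # v # b)) =
    card (UK_fibre_hd 1 (y # a) (v # b)) + (if y < x then card (UK_fibre_hd (-1) (y # a) (v # b)) else 0)"
proof -
  have "{t \<in> UK_fibre (y # a) (v # b). UK_step x y (-1 * int v) (hd t)} =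
      UK_fibre_hd 1 (y # a) (v # b) \<union> (if y < x then UK_fibre_hd (-1) (y # a) (v # b) else {})"
  proof (intro equalityI subsetI)
    fix t assume t: "t \<in> {t \<in> UK_fibre (y # a) (v # b). UK_step x y (-1 * int v) (hd t)}"
    then have "hd t = int v \<or> hd t = - int v" using hd_UK_fibre by blast
    then show "t \<in> UK_fibre_hd 1 (y # a) (v # b) \<union> (if y < x then UK_fibre_hd (-1) (y # a) (v # b) else {})"
      using t assms by (auto simp: UK_step_def prec_rank_def UK_fibre_hd_def)
  qed (use assms in \<open>auto simp: UK_step_def prec_rank_def UK_fibre_hd_def split: if_splits\<close>)
  moreover have "UK_fibre_hd 1 (y # a) (v # b) \<inter> UK_fibre_hd (-1) (y # a) (v # b) = {}"
    using assms by (auto simp: UK_fibre_hd_def)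
  moreover have "finite (UK_fibre_hd sg (y # a) (v # b))" for sg
    using finite_UK_fibre by (simp add: UK_fibre_hd_def)
  ultimately show ?thesis using card_UK_fibre_hd_Cons_Cons[OF assms, of "-1"] by (simp add: card_Un_disjoint)
qed

lemma first_block_increasing_peak:
  assumes "first_block_increasing (y # a) (v # b)" "length b = length a" "a \<noteq> []" "hd a \<le> y"
  shows "v < hd b"
  using assms by (cases a; cases b) auto

lemma card_UK_fibre_hd_Cons_Cons_eq:
  fixes x y v :: nat and a b :: "nat list"
  defines "incr \<equiv> first_block_increasing (y # a) (v # b)" and "W \<equiv> CX_weight (y # a) (v # b)"
  assumes "length b = length a" "sorted (v # v # b)" "1 \<le> v"
    and pos: "of_nat (card (UK_fibre_hd 1 (y # a) (v # b))) = (if incr then W / 2 else 0)"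
    and neg: "of_nat (card (UK_fibre_hd (-1) (y # a) (v # b))) = (if incr then W / 2 else W)"
  shows "of_nat (card (UK_fibre_hd 1 (x # y # a) (v # v # b))) =
      (if first_block_increasing (x # y # a) (v # v # b) then CX_weight (x # y # a) (v # v # b) / 2 else 0)
    \<and> of_nat (card (UK_fibre_hd (-1) (x # y # a) (v # v # b))) =
      (if first_block_increasing (x # y # a) (v # v # b) then CX_weight (x # y # a) (v # v # b) / 2
       else CX_weight (x # y # a) (v # v # b))"
proof -
  have weight: "CX_weight (x # y # a) (v # v # b) =
      (if a \<noteq> [] \<and> x \<le> y \<and> hd a \<le> y \<longrightarrow> v < hd b then (if x = y then W / 2 else W) else 0)"
    using CX_weight_Cons_Cons_eq[OF assms(3-5)] by (simp add: W_def)
  have no_peak: "a \<noteq> [] \<and> x \<le> y \<and> hd a \<le> y \<longrightarrow> v < hd b" if incr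
    using first_block_increasing_peak that assms(3) by (auto simp: incr_def)
  have zero: "CX_weight (x # y # a) (v # v # b) = 0" if "x \<le> y" "\<not> incr"
    using not_CX_C_if_first_block_not_increasing[OF assms(3,4)] that by (simp add: CX_weight_def incr_def)
  have "of_nat (card (UK_fibre_hd 1 (x # y # a) (v # v # b))) = (if x < y then (if incr then W / 2 else 0) else (0::rat))"
    using card_UK_fibre_hd_pos_eq[OF assms(5), of x y a b] pos by simp
  moreover have "of_nat (card (UK_fibre_hd (-1) (x # y # a) (v # v # b))) =
      (if incr then W / 2 else 0) + (if y < x then (if incr then W / 2 else W) else (0::rat))"
    using card_UK_fibre_hd_neg_eq[OF assms(5), of x y a b] pos neg by simp
  moreover have "first_block_increasing (x # y # a) (v # v # b) \<longleftrightarrow> x < y \<and> incr"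
    by (simp add: incr_def)
  ultimately show ?thesis
    using weight no_peak zero by (cases incr; cases "x < y"; cases "y < x") auto
qed

lemma card_UK_fibre_hd:
  assumes "length b = length a" "a \<noteq> []" "sorted b" "\<forall>z\<in>set b. 1 \<le> z"
  shows "of_nat (card (UK_fibre_hd 1 a b)) = (if first_block_increasing a b then CX_weight a b / 2 else 0)
    \<and> of_nat (card (UK_fibre_hd (-1) a b)) =
      (if first_block_increasing a b then CX_weight a b / 2 else CX_weight a b)"
  using assms
proof (induction a arbitrary: b)
  case (Cons x a)
  show ?case
  proof (cases a)
    case Nil
    then obtain v where "b = [v]" "1 \<le> v" using Cons.prems by (cases b) auto
    then show ?thesis using Nil by (simp add: UK_fibre_hd_single CX_weight_single)
  next
    case (Cons y a')
    then obtain v w b' where b: "b = v # w # b'" "length b' = length a'"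
      using \<open>length b = length (x # a)\<close> by (auto simp: length_Suc_conv)
    have v: "1 \<le> v" "v \<le> w" using Cons.prems(3,4) b by auto
    have IH: "of_nat (card (UK_fibre_hd 1 (y # a') (w # b'))) =
        (if first_block_increasing (y # a') (w # b') then CX_weight (y # a') (w # b') / 2 else 0)
      \<and> of_nat (card (UK_fibre_hd (-1) (y # a') (w # b'))) =
        (if first_block_increasing (y # a') (w # b') then CX_weight (y # a') (w # b') / 2
         else CX_weight (y # a') (w # b'))"
      using Cons.IH[of "w # b'"] Cons.prems b \<open>a = y # a'\<close> by simp
    show ?thesis
    proof (cases "v < w")
      case True
      have "of_nat (card (UK_fibre (y # a') (w # b'))) = CX_weight (y # a') (w # b')"
        using IH card_UK_fibre_split[of w y a' b'] v by (simp split: if_splits)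
      then show ?thesis
        using card_UK_fibre_hd_less[OF v(1) True] CX_weight_Cons_Cons_less[OF b(2) _ v(1) True, of x y]
          Cons.prems(3) b \<open>a = y # a'\<close> True by simp
    next
      case False
      then show ?thesis
        using card_UK_fibre_hd_Cons_Cons_eq[OF b(2) _ v(1), of y x] IH Cons.prems(3) b \<open>a = y # a'\<close> v
        by simp
    qed
  qed
qed simp

lemma card_UK_fibre:
  assumes "length b = length a" "sorted b" "\<forall>z\<in>set b. 1 \<le> z"
  shows "of_nat (card (UK_fibre a b)) = CX_weight a b"
proof (cases a)
  case Nil
  then show ?thesis using assms by (simp add: UK_fibre_Nil CX_weight_Nil)
next
  case (Cons y a')
  then obtain w b' where "b = w # b'" "1 \<le> w" using assms by (cases b) auto
  then show ?thesis
    using card_UK_fibre_split card_UK_fibre_hd[OF assms(1) _ assms(2,3)] Cons by (simp split: if_splits)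
qed

section \<open>Expansion into \<open>L\<close>- and \<open>K\<close>-functions\<close>

lemma mono_eq_imp_mset_eq: "mono b = mono b' \<Longrightarrow> mset b = mset b'"
  unfolding mono_def by (rule multiset_eqI) (rule fun_cong)

lemma finite_mono_eq: "finite {b. mono b = m}"
proof (cases "\<exists>b. mono b = m")
  case True
  then obtain b0 where b0: "mono b0 = m" by blast
  have "{b. mono b = m} \<subseteq> {b. set b \<subseteq> set b0 \<and> length b = length b0}"
  proof
    fix b assume "b \<in> {b. mono b = m}"
    then have "mset b = mset b0" using b0 mono_eq_imp_mset_eq by simp
    then show "b \<in> {b. set b \<subseteq> set b0 \<and> length b = length b0}"
      using mset_eq_setD[OF \<open>mset b = mset b0\<close>] mset_eq_length[OF \<open>mset b = mset b0\<close>] by simp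
  qed
  then show ?thesis using finite_lists_length_eq[of "set b0" "length b0"] finite_subset by blast
qed simp

lemma mono_length_bound: obtains N where "\<And>b. mono b = m \<Longrightarrow> length b \<le> N"
  using finite_maxlen[OF finite_mono_eq[of m]] by (metis less_imp_le_nat mem_Collect_eq)

lemma finite_mono_map_nat_abs_eq: "finite {s. mono (map nat_abs s) = m}"
proof -
  have "{s. mono (map nat_abs s) = m} = (\<Union>b\<in>{b. mono b = m}. {s. map nat_abs s = b})" by auto
  then show ?thesis using finite_mono_eq finite_map_nat_abs_eq by simp
qed

definition Hecke_coeff :: "(nat \<Rightarrow> nat) \<Rightarrow> nat list \<Rightarrow> rat poly" where
  "Hecke_coeff \<sigma> \<pi> = (if multiperm \<pi> \<and> \<pi> \<in> HA \<sigma> then beta ^ (length \<pi> - lenA \<sigma>) else 0)"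

lemma beta_power_eq_map_poly: "beta ^ k = map_poly rat_of_int (monom 1 k)"
  by (simp add: beta_def map_poly_monom monom_power)

lemma Hecke_coeff_nonzero_iff: "Hecke_coeff \<sigma> \<pi> \<noteq> 0 \<longleftrightarrow> multiperm \<pi> \<and> \<pi> \<in> HA \<sigma>"
  by (simp add: Hecke_coeff_def beta_power_eq_map_poly map_poly_eq_0_iff monom_eq_0_iff)

lemma Hecke_coeff_integral: "Hecke_coeff \<sigma> \<pi> \<in> range (map_poly rat_of_int)"
  by (auto simp: Hecke_coeff_def beta_power_eq_map_poly intro: range_eqI[of _ _ 0])

lemma multiperm_remdups_adj: "multiperm (remdups_adj a)"
  unfolding multiperm_def using remdups_adj_adjacent by (metis Suc_eq_plus1)

lemma remdups_adj_mem_HA_iff: "remdups_adj a \<in> HA \<sigma> \<longleftrightarrow> a \<in> HA \<sigma>"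
  by (simp add: HA_def demA_remdups_adj)

lemma Hecke_coeff_mult_beta_power:
  assumes "remdups_adj a \<in> HA \<sigma>" "multiperm (remdups_adj a)"
  shows "Hecke_coeff \<sigma> (remdups_adj a) * beta ^ (length a - length (remdups_adj a)) = beta ^ (length a - lenA \<sigma>)"
proof -
  have "lenA \<sigma> \<le> length (remdups_adj a)" using assms(1) lenA_demA_le_length by (auto simp: HA_def)
  then show ?thesis using assms remdups_adj_length[of a] by (simp add: Hecke_coeff_def power_add[symmetric])
qed

text \<open>Grouping the Hecke words of \<open>\<sigma>\<close> by \<open>mperm\<close>, i.e.\ by the Hecke word without repetitions
  they arise from, turns a sum over decorated Hecke words into a combination of the sums
  \<open>F \<pi>\<close> over the decorated words \<open>a\<close> with \<open>mperm a = \<pi>\<close>.\<close>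

lemma sum_HA_group_mperm:
  fixes R :: "nat list \<Rightarrow> 'b \<Rightarrow> bool"
  defines "F \<equiv> \<lambda>\<pi>. \<Sum>(a, t) \<in> {(a, t). mperm a = \<pi> \<and> R a t}. beta ^ (length a - length \<pi>)"
  assumes \<sigma>: "finitary_perm \<sigma>" and R: "\<And>a t. R a t \<Longrightarrow> length a \<le> N \<and> t \<in> T" and "finite T"
  shows "(\<Sum>(a, t) \<in> {(a, t). a \<in> HA \<sigma> \<and> R a t}. beta ^ (length a - lenA \<sigma>)) =
      (\<Sum>\<pi> \<in> {\<pi>. Hecke_coeff \<sigma> \<pi> \<noteq> 0 \<and> F \<pi> \<noteq> 0}. Hecke_coeff \<sigma> \<pi> * F \<pi>)"
    and "finite {\<pi>. Hecke_coeff \<sigma> \<pi> \<noteq> 0 \<and> F \<pi> \<noteq> 0}"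
proof -
  let ?S = "{(a, t). a \<in> HA \<sigma> \<and> R a t}" and ?P = "{\<pi> \<in> HA \<sigma>. length \<pi> \<le> N \<and> multiperm \<pi>}"
  have fin_HA: "finite {a \<in> HA \<sigma>. length a \<le> N}" by (rule finite_HA_length_le[OF \<sigma>])
  then have "finite ?P" by (rule rev_finite_subset) auto
  have "?S \<subseteq> {a \<in> HA \<sigma>. length a \<le> N} \<times> T" using R by auto
  then have "finite ?S" using fin_HA \<open>finite T\<close> by (auto intro: finite_subset)
  have sub: "{\<pi>. Hecke_coeff \<sigma> \<pi> \<noteq> 0 \<and> F \<pi> \<noteq> 0} \<subseteq> ?P"
  proof
    fix \<pi> assume \<pi>: "\<pi> \<in> {\<pi>. Hecke_coeff \<sigma> \<pi> \<noteq> 0 \<and> F \<pi> \<noteq> 0}"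
    then have "{(a, t). mperm a = \<pi> \<and> R a t} \<noteq> {}" unfolding F_def by force
    then obtain a t where "mperm a = \<pi>" "R a t" by blast
    then have "length \<pi> \<le> N" using R remdups_adj_length[of a] by (metis le_trans)
    then show "\<pi> \<in> ?P" using \<pi> by (simp add: Hecke_coeff_nonzero_iff)
  qed
  have into: "mperm a \<in> ?P" if "a \<in> HA \<sigma>" "R a t" for a t
  proof -
    have "length (mperm a) \<le> N" using R[OF that(2)] remdups_adj_length[of a] by linarith
    then show ?thesis using that(1) by (simp add: remdups_adj_mem_HA_iff multiperm_remdups_adj)
  qed
  have "(\<Sum>x \<in> ?S. case x of (a, t) \<Rightarrow> beta ^ (length a - lenA \<sigma>)) =
      (\<Sum>\<pi> \<in> ?P. \<Sum>x \<in> {x \<in> ?S. mperm (fst x) = \<pi>}. case x of (a, t) \<Rightarrow> beta ^ (length a - lenA \<sigma>))"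
    using into by (intro sum.group[OF \<open>finite ?S\<close> \<open>finite ?P\<close>, symmetric]) auto
  also have "\<dots> = (\<Sum>\<pi> \<in> ?P. Hecke_coeff \<sigma> \<pi> * F \<pi>)"
  proof (rule sum.cong[OF refl])
    fix \<pi> assume \<pi>: "\<pi> \<in> ?P"
    have fibre: "{x \<in> ?S. mperm (fst x) = \<pi>} = {(a, t). mperm a = \<pi> \<and> R a t}"
      using \<pi> remdups_adj_mem_HA_iff[of _ \<sigma>] by fastforce
    have "beta ^ (length a - lenA \<sigma>) = Hecke_coeff \<sigma> \<pi> * beta ^ (length a - length \<pi>)"
      if "mperm a = \<pi>" for a
      using Hecke_coeff_mult_beta_power[of a \<sigma>] that \<pi> by simp
    then show "(\<Sum>x \<in> {x \<in> ?S. mperm (fst x) = \<pi>}. case x of (a, t) \<Rightarrow> beta ^ (length a - lenA \<sigma>)) =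
        Hecke_coeff \<sigma> \<pi> * F \<pi>"
      unfolding fibre F_def sum_distrib_left by (intro sum.cong) auto
  qed
  also have "\<dots> = (\<Sum>\<pi> \<in> {\<pi>. Hecke_coeff \<sigma> \<pi> \<noteq> 0 \<and> F \<pi> \<noteq> 0}. Hecke_coeff \<sigma> \<pi> * F \<pi>)"
    using sub by (intro sum.mono_neutral_right[OF \<open>finite ?P\<close>]) auto
  finally show "(\<Sum>(a, t) \<in> ?S. beta ^ (length a - lenA \<sigma>)) =
      (\<Sum>\<pi> \<in> {\<pi>. Hecke_coeff \<sigma> \<pi> \<noteq> 0 \<and> F \<pi> \<noteq> 0}. Hecke_coeff \<sigma> \<pi> * F \<pi>)" .
  show "finite {\<pi>. Hecke_coeff \<sigma> \<pi> \<noteq> 0 \<and> F \<pi> \<noteq> 0}"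
    using sub \<open>finite ?P\<close> by (rule finite_subset)
qed

lemma CX_eq_CX_C:
  assumes "\<forall>j\<in>set a. 1 \<le> j \<and> (X = D \<longrightarrow> 2 \<le> j)"
  shows "CX X a b = CX C a b"
proof -
  have "\<not> (X = B \<and> a ! i = 0 \<and> a ! (i + 1) = 0 \<or> X = D \<and> a ! i = a ! (i + 1) \<and> \<bar>a ! i\<bar> = 1)"
    if "i + 1 < length a" for i
    using that assms nth_mem[of i a] by fastforce
  then show ?thesis by (auto simp: CX_def)
qed

lemma oX_eq_0:
  assumes "\<forall>j\<in>set a. 1 \<le> j \<and> (X = D \<longrightarrow> 2 \<le> j)"
  shows "oX X a = 0"
  using assms by (cases X) (fastforce simp: oX_def filter_empty_conv)+

lemma GX_lift_perm:
  assumes "finitary_perm \<sigma>" "X = D \<Longrightarrow> \<sigma> 1 = 1"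
  shows "GX X (lift_perm \<sigma>) m =
    (\<Sum>(a, b) \<in> {(a, b). a \<in> HA \<sigma> \<and> CX C (map int a) b \<and> mono b = m}.
       smult (CX_weight a b) (beta ^ (length a - lenA \<sigma>)))"
proof -
  let ?S = "{(a, b). a \<in> HA \<sigma> \<and> CX C (map int a) b \<and> mono b = m}"
  have letters: "\<forall>j\<in>set (map int a). 1 \<le> j \<and> (X = D \<longrightarrow> 2 \<le> j)" if "a \<in> HA \<sigma>" for a
    using HX_lift_perm_letters[OF assms] HX_lift_perm[OF assms] that by blast
  have image: "{(a', b). a' \<in> HX X (lift_perm \<sigma>) \<and> CX X a' b \<and> mono b = m} = (\<lambda>(a, b). (map int a, b)) ` ?S"
    using HX_lift_perm[OF assms] CX_eq_CX_C[OF letters] by fastforce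
  have inj: "inj_on (\<lambda>(a, b). (map int a, b)) ?S" by (auto simp: inj_on_def inj_map_eq_map)
  show ?thesis unfolding GX_def
  proof (rule sum.reindex_cong[OF inj image])
    fix x assume "x \<in> ?S"
    then obtain a b where x: "x = (a, b)" "a \<in> HA \<sigma>" "CX C (map int a) b" by blast
    then show "(case (\<lambda>(a, b). (map int a, b)) x of (a', b) \<Rightarrow>
          smult (2 powi (int (card (set b)) - int (gamma a' b) - int (oX X a')))
            (beta ^ (length a' - lenX X (lift_perm \<sigma>)))) =
        (case x of (a, b) \<Rightarrow> smult (CX_weight a b) (beta ^ (length a - lenA \<sigma>)))"
      using oX_eq_0[OF letters[OF x(2)]] by (simp add: CX_weight_def lenX_lift_perm[OF assms(1)])
  qed
qed

lemma UK_imp_nat_abs_increasing: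
  assumes "UK a s"
  shows "sorted (map nat_abs s) \<and> (\<forall>z\<in>set (map nat_abs s). 1 \<le> z) \<and> length s = length a"
proof -
  have nonzero: "\<forall>x\<in>set s. x \<noteq> 0" and "sorted (map prec_rank s)" and "length s = length a"
    using assms by (auto simp: UK_def)
  then have "sorted_wrt (\<lambda>x y. prec_rank x \<le> prec_rank y) s" by (simp add: sorted_wrt_map)
  then have "sorted_wrt (\<lambda>x y. nat_abs x \<le> nat_abs y) s"
    by (rule sorted_wrt_mono_rel[rotated]) (use nonzero in \<open>auto simp: prec_rank_def split: if_splits\<close>)
  then show ?thesis using nonzero \<open>length s = length a\<close> by (auto simp: sorted_wrt_map)
qed

lemma sum_CX_weight_eq_sum_UK:
  fixes f :: "nat list \<Rightarrow> rat poly"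
  assumes fin: "finite {a \<in> A. length a \<le> N}" and N: "\<And>b. mono b = m \<Longrightarrow> length b \<le> N"
  shows "(\<Sum>(a, b) \<in> {(a, b). a \<in> A \<and> CX C (map int a) b \<and> mono b = m}. smult (CX_weight a b) (f a)) =
    (\<Sum>(a, s) \<in> {(a, s). a \<in> A \<and> UK a s \<and> mono (map nat_abs s) = m}. f a)"
proof -
  let ?S1 = "{(a, b). a \<in> A \<and> CX C (map int a) b \<and> mono b = m}"
  let ?S2 = "{(a, b). a \<in> A \<and> sorted b \<and> (\<forall>z\<in>set b. 1 \<le> z) \<and> length b = length a \<and> mono b = m}"
  let ?SK = "{(a, s). a \<in> A \<and> UK a s \<and> mono (map nat_abs s) = m}"
  let ?g = "\<lambda>(a, s). (a, map nat_abs s)"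
  have "?S2 \<subseteq> {a \<in> A. length a \<le> N} \<times> {b. mono b = m}" using N by clarsimp (metis)
  then have "finite ?S2" by (rule finite_subset) (simp add: fin finite_mono_eq)
  have "?SK \<subseteq> {a \<in> A. length a \<le> N} \<times> {s. mono (map nat_abs s) = m}"
  proof
    fix x assume "x \<in> ?SK"
    then obtain a s where x: "x = (a, s)" "a \<in> A" "UK a s" "mono (map nat_abs s) = m" by blast
    then have "length a \<le> N" using N[OF x(4)] UK_imp_nat_abs_increasing[OF x(3)] by simp
    then show "x \<in> {a \<in> A. length a \<le> N} \<times> {s. mono (map nat_abs s) = m}" using x by simp
  qed
  then have "finite ?SK" by (rule finite_subset) (simp add: fin finite_mono_map_nat_abs_eq)
  have "(\<Sum>x \<in> ?S1. case x of (a, b) \<Rightarrow> smult (CX_weight a b) (f a)) =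
      (\<Sum>x \<in> ?S2. case x of (a, b) \<Rightarrow> smult (CX_weight a b) (f a))"
  proof (rule sum.mono_neutral_left[OF \<open>finite ?S2\<close>])
    show "?S1 \<subseteq> ?S2" by (auto simp: CX_def)
  qed (auto simp: CX_weight_def split: if_splits)
  also have "\<dots> = (\<Sum>y \<in> ?S2. \<Sum>x \<in> {x \<in> ?SK. ?g x = y}. case x of (a, s) \<Rightarrow> f a)"
  proof (rule sum.cong[OF refl])
    fix y assume "y \<in> ?S2"
    then obtain a b where y: "y = (a, b)" "a \<in> A" "sorted b" "\<forall>z\<in>set b. 1 \<le> z" "length b = length a" "mono b = m"
      by blast
    have "{x \<in> ?SK. ?g x = y} = Pair a ` UK_fibre a b" using y by (auto simp: UK_fibre_def)
    then have "(\<Sum>x \<in> {x \<in> ?SK. ?g x = y}. case x of (a, s) \<Rightarrow> f a) = of_nat (card (UK_fibre a b)) * f a"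
      by (simp add: sum.reindex inj_on_def)
    then show "(case y of (a, b) \<Rightarrow> smult (CX_weight a b) (f a)) =
        (\<Sum>x \<in> {x \<in> ?SK. ?g x = y}. case x of (a, s) \<Rightarrow> f a)"
      using card_UK_fibre[OF y(5,3,4)] y(1) by (simp add: of_nat_mult_conv_smult)
  qed
  also have "\<dots> = (\<Sum>x \<in> ?SK. case x of (a, s) \<Rightarrow> f a)"
    using \<open>finite ?SK\<close> \<open>finite ?S2\<close> UK_imp_nat_abs_increasing by (intro sum.group) auto
  finally show ?thesis .
qed

theorem Theta_rel_GA_GX_lift_perm:
  assumes \<sigma>: "finitary_perm \<sigma>" and D: "X = D \<Longrightarrow> \<sigma> 1 = 1"
  shows "Theta_rel (GA \<sigma>) (GX X (lift_perm \<sigma>))"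
proof -
  have L: "GA \<sigma> m = (\<Sum>\<pi> \<in> {\<pi>. Hecke_coeff \<sigma> \<pi> \<noteq> 0 \<and> Lfun \<pi> m \<noteq> 0}. Hecke_coeff \<sigma> \<pi> * Lfun \<pi> m)
      \<and> finite {\<pi>. Hecke_coeff \<sigma> \<pi> \<noteq> 0 \<and> Lfun \<pi> m \<noteq> 0}" for m
  proof -
    obtain N where N: "\<And>b. mono b = m \<Longrightarrow> length b \<le> N" using mono_length_bound[where m = m] by blast
    have "length a \<le> N \<and> b \<in> {b. mono b = m}" if "CA a b \<and> mono b = m" for a b
      using that N[of b] by (simp add: CA_def)
    from sum_HA_group_mperm[OF \<sigma> this finite_mono_eq] show ?thesis
      unfolding GA_def Lfun_def by simp
  qed
  have K: "GX X (lift_perm \<sigma>) m =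
      (\<Sum>\<pi> \<in> {\<pi>. Hecke_coeff \<sigma> \<pi> \<noteq> 0 \<and> Kfun \<pi> m \<noteq> 0}. Hecke_coeff \<sigma> \<pi> * Kfun \<pi> m)
      \<and> finite {\<pi>. Hecke_coeff \<sigma> \<pi> \<noteq> 0 \<and> Kfun \<pi> m \<noteq> 0}" for m
  proof -
    obtain N where N: "\<And>b. mono b = m \<Longrightarrow> length b \<le> N" using mono_length_bound[where m = m] by blast
    have R: "length a \<le> N \<and> s \<in> {s. mono (map nat_abs s) = m}" if "UK a s \<and> mono (map nat_abs s) = m" for a s
      using that N[of "map nat_abs s"] UK_imp_nat_abs_increasing[of a s] by simp
    have "GX X (lift_perm \<sigma>) m =
        (\<Sum>(a, s) \<in> {(a, s). a \<in> HA \<sigma> \<and> UK a s \<and> mono (map nat_abs s) = m}. beta ^ (length a - lenA \<sigma>))"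
      using GX_lift_perm[OF \<sigma> D] sum_CX_weight_eq_sum_UK[OF finite_HA_length_le[OF \<sigma>] N] by simp
    then show ?thesis
      using sum_HA_group_mperm[OF \<sigma> R finite_mono_map_nat_abs_eq] unfolding Kfun_def by simp
  qed
  show ?thesis
    unfolding Theta_rel_def using L K Hecke_coeff_integral
    by (intro exI[of _ "Hecke_coeff \<sigma>"]) (auto simp: Hecke_coeff_nonzero_iff HA_def)
qed

theorem proposition4p6:
  fixes X :: ctype and "is" :: "nat list"
  assumes "\<forall>i\<in>set is. 1 \<le> i"
    and "X = D \<Longrightarrow> wordT is 1 = 1"
  shows "Theta_rel (GA (wordS is)) (GX X (wordT is))"
proof -
  have lift: "wordT is = lift_perm (wordS is)" using wordT_eq_lift_perm_wordS[OF assms(1)] .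
  have "X = D \<Longrightarrow> wordS is 1 = 1" using assms(2) lift_perm_int[of "wordS is" 1] by (simp add: lift)
  then show ?thesis using Theta_rel_GA_GX_lift_perm[OF finitary_perm_wordS[OF assms(1)]] by (simp add: lift)
qed

end
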